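(* Suppose Assumptions (A1), (A2), (A3) hold, and either Assumption (SC) or Assumption (LIN) holds. If $x\in\mathcal{X}$ is an SCSC point, then $\lim_{t\to 0^+}\nabla_x\widetilde{\phi}_t(x)=\nabla_x\phi(x)$.
   Context: Let $f,g,h_1,\dots,h_k:\mathbb{R}^n\times\mathbb{R}^m\to\mathbb{R}$ and $\mathcal{X}\subseteq\mathbb{R}^n$. For $x\in\mathcal{X}$ let $\mathcal{Y}(x)=\{y\in\mathbb{R}^m: h_i(x,y)\le 0,\ i=1,\dots,k\}$ and let $y^*(x)=\arg\min_{y\in\mathcal{Y}(x)} g(x,y)$ (the set of lower-level solutions). The hyperfunction is $\phi(x)=\min_{y\in y^*(x)} f(x,y)$, and $\nabla_x\phi(x)=\nabla_x f(x,y^*(x))+(\nabla_x y^*(x))^\top\nabla_y f(x,y^*(x))$ where $y^*$ is single-valued and differentiable. For $t>0$ the barrier reformulated lower-level objective is $\widetilde g_t(x,y)=g(x,y)-t\sum_{i=1}^k\log(-h_i(x,y))$ (defined when $h_i(x,y)<0$ for all $i$), $y_t^*(x)=\arg\min_{y}\widetilde g_t(x,y)$, and $\widetilde\phi_t(x)=f(x,y_t^*(x))$. Assumptions: (A1) $f$ is once and $g,h_i$ are twice continuously differentiable; (A2) $\mathcal{X}$ is convex and compact and for every $x\in\mathcal{X}$ there is $y$ with $h_i(x,y)<0$ for all $i$; (A3) (LICQ) for every $x\in\mathcal{X}$ and $y\in y^*(x)$, the gradients $\{\nabla_y h_i(x,y): h_i(x,y)=0\}$ are linearly independent. (SC) for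 every $x\in\mathcal{X}$, $g(x,\cdot)$ is $\mu_g$-strongly convex and each $h_i(x,\cdot)$ is convex. (LIN) for every $x\in\mathcal{X}$, $g(x,\cdot)$ and all $h_i(x,\cdot)$ are linear (affine) in $y$, i.e. the lower-level problem is a linear program, and $\mathcal{Y}(x)$ is compact. For $y\in y^*(x)$ let $\lambda_i(x,y)\ge 0$ denote the optimal KKT Lagrange multiplier of the $i$-th constraint. A point $x$ is an SCSC (strict complementarity slackness condition) point if for every $y\in y^*(x)$ and every $i$, $h_i(x,y)=0$ implies $\lambda_i(x,y)>0$. *)

theory Defs
  imports "HOL-Analysis.Analysis"
begin

text \<open>Points of R^n x R^m are pairs (x,y) with x :: real^'n, y :: real^'m.
  The constraint functions are h 0, ..., h (k-1) (the paper's h_1..h_k).\<close>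

definition C1_fun :: "('a::euclidean_space \<Rightarrow> real) \<Rightarrow> bool" where
  "C1_fun F \<longleftrightarrow> (\<exists>F'. (\<forall>z. (F has_derivative blinfun_apply (F' z)) (at z)) \<and> continuous_on UNIV F')"

definition C2_fun :: "('a::euclidean_space \<Rightarrow> real) \<Rightarrow> bool" where
  "C2_fun F \<longleftrightarrow> (\<exists>F' F''. (\<forall>z. (F has_derivative blinfun_apply (F' z)) (at z))
      \<and> (\<forall>z. (F' has_derivative blinfun_apply (F'' z)) (at z)) \<and> continuous_on UNIV F'')"

definition strongly_convex_on :: "'a::real_normed_vector set \<Rightarrow> ('a \<Rightarrow> real) \<Rightarrow> real \<Rightarrow> bool" where
  "strongly_convex_on S F \<mu> \<longleftrightarrow> convex_on S (\<lambda>y. F y - \<mu> / 2 * (norm y)\<^sup>2)"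

definition Yset :: "(nat \<Rightarrow> ('x \<times> 'y) \<Rightarrow> real) \<Rightarrow> nat \<Rightarrow> 'x \<Rightarrow> 'y set" where
  "Yset h k x = {y. \<forall>i<k. h i (x, y) \<le> 0}"

definition ystar :: "(('x \<times> 'y) \<Rightarrow> real) \<Rightarrow> (nat \<Rightarrow> ('x \<times> 'y) \<Rightarrow> real) \<Rightarrow> nat \<Rightarrow> 'x \<Rightarrow> 'y set" where
  "ystar g h k x = {y \<in> Yset h k x. \<forall>y' \<in> Yset h k x. g (x, y) \<le> g (x, y')}"

text \<open>Barrier reformulated lower-level objective (meaningful where all h i < 0).\<close>
definition gbar :: "real \<Rightarrow> (('x \<times> 'y) \<Rightarrow> real) \<Rightarrow> (nat \<Rightarrow> ('x \<times> 'y) \<Rightarrow> real) \<Rightarrow> nat \<Rightarrow> ('x \<times> 'y) \<Rightarrow> real" where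
  "gbar t g h k z = g z - t * (\<Sum>i<k. ln (- h i z))"

definition ytstar :: "real \<Rightarrow> (('x \<times> 'y) \<Rightarrow> real) \<Rightarrow> (nat \<Rightarrow> ('x \<times> 'y) \<Rightarrow> real) \<Rightarrow> nat \<Rightarrow> 'x \<Rightarrow> 'y set" where
  "ytstar t g h k x = {y. (\<forall>i<k. h i (x, y) < 0) \<and>
      (\<forall>y'. (\<forall>i<k. h i (x, y') < 0) \<longrightarrow> gbar t g h k (x, y) \<le> gbar t g h k (x, y'))}"

definition Dy :: "(('x::real_normed_vector \<times> 'y::real_normed_vector) \<Rightarrow> real) \<Rightarrow> 'x \<Rightarrow> 'y \<Rightarrow> 'y \<Rightarrow> real" where
  "Dy F x y = frechet_derivative (\<lambda>y'. F (x, y')) (at y)"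

definition KKT_mult :: "(('x::real_normed_vector \<times> 'y::real_normed_vector) \<Rightarrow> real) \<Rightarrow> (nat \<Rightarrow> ('x \<times> 'y) \<Rightarrow> real) \<Rightarrow> nat \<Rightarrow> 'x \<Rightarrow> 'y \<Rightarrow> (nat \<Rightarrow> real) \<Rightarrow> bool" where
  "KKT_mult g h k x y lam \<longleftrightarrow> (\<forall>i<k. lam i \<ge> 0 \<and> lam i * h i (x, y) = 0)
      \<and> (\<forall>v. Dy g x y v + (\<Sum>i<k. lam i * Dy (h i) x y v) = 0)"

definition SCSC_point :: "(('x::real_normed_vector \<times> 'y::real_normed_vector) \<Rightarrow> real) \<Rightarrow> (nat \<Rightarrow> ('x \<times> 'y) \<Rightarrow> real) \<Rightarrow> nat \<Rightarrow> 'x \<Rightarrow> bool" where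
  "SCSC_point g h k x \<longleftrightarrow> (\<forall>y \<in> ystar g h k x. \<forall>lam. KKT_mult g h k x y lam \<longrightarrow>
      (\<forall>i<k. h i (x, y) = 0 \<longrightarrow> lam i > 0))"

definition LICQ :: "(nat \<Rightarrow> ('x::real_normed_vector \<times> 'y::real_normed_vector) \<Rightarrow> real) \<Rightarrow> nat \<Rightarrow> 'x \<Rightarrow> 'y \<Rightarrow> bool" where
  "LICQ h k x y \<longleftrightarrow> (\<forall>c :: nat \<Rightarrow> real.
      (\<forall>v. (\<Sum>i\<in>{i. i < k \<and> h i (x, y) = 0}. c i * Dy (h i) x y v) = 0) \<longrightarrow>
      (\<forall>i. i < k \<and> h i (x, y) = 0 \<longrightarrow> c i = 0))"

text \<open>The hypergradient formula
  grad_x f(x,Y x) + (Jacobian of Y at x)^T grad_y f(x,Y x), written componentwise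
  via the (total) Frechet derivative of f at (x, Y x); DY is the derivative of Y at x.\<close>
definition hypergrad :: "(((real^'n) \<times> 'y::real_normed_vector) \<Rightarrow> real) \<Rightarrow> (real^'n \<Rightarrow> 'y) \<Rightarrow> (real^'n \<Rightarrow> 'y) \<Rightarrow> real^'n \<Rightarrow> real^'n" where
  "hypergrad f Y DY x = (\<chi> j. frechet_derivative f (at (x, Y x)) (axis j 1, DY (axis j 1)))"

end

theory Submission
  imports Defs
begin

text \<open>
  Let \<open>y0\<close> solve the lower-level problem at \<open>x\<close>, with multipliers \<open>lam\<close>. Consider the reduced KKT map
  \<open>(x', t, y, \<mu>) \<mapsto> (x', t, \<nabla>\<^sub>y g + \<Sum>\<^sub>i \<mu>\<^sub>i \<nabla>\<^sub>y h\<^sub>i, (\<mu>\<^sub>i h\<^sub>i + t)\<^sub>i active)\<close>, in which the inactive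
  multipliers are eliminated as \<open>\<mu>\<^sub>i = t / (- h\<^sub>i)\<close>, so that for \<open>t > 0\<close> its zeros are stationary
  points of the barrier objective. LICQ and strict complementarity, together with strong convexity or,
  in the linear case, SCSC at every lower-level solution, make its derivative at \<open>(x, 0, y0, lam)\<close>
  invertible; hence it has a \<open>C\<^sup>1\<close> local inverse \<open>\<Psi>\<close>. For \<open>x'\<close> near \<open>x\<close> and small \<open>t \<ge> 0\<close> the active
  multipliers of \<open>\<Psi> (x', t, 0, 0)\<close> stay positive, so by convexity its \<open>y\<close>-component is the unique
  lower-level (\<open>t = 0\<close>) resp. barrier (\<open>t > 0\<close>) solution. Both solution maps and their \<open>x\<close>-derivatives
  are thus read off \<open>\<Psi>\<close> and its derivative, which are continuous in \<open>t\<close>, and the hypergradients converge.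
\<close>

section \<open>Derivatives and convexity\<close>

lemma has_derivative_vec_lambda:
  fixes s :: "'a::real_normed_vector \<Rightarrow> 'i::finite \<Rightarrow> real"
  assumes "\<And>j. ((\<lambda>p. s p j) has_derivative (\<lambda>w. ds w j)) (at p)"
  shows "((\<lambda>p. \<chi> j. s p j) has_derivative (\<lambda>w. \<chi> j. ds w j)) (at p)"
proof -
  have "((\<lambda>p. (\<chi> j. s p j) \<bullet> i) has_derivative (\<lambda>w. (\<chi> j. ds w j) \<bullet> i)) (at p)"
    if "i \<in> Basis" for i :: "real^'i"
    using that assms by (auto simp: Basis_vec_def inner_axis)
  then show ?thesis using has_derivative_componentwise_within by blast
qed

lemma has_derivative_slice_snd:
  assumes "(F has_derivative D) (at (a, b))"
  shows "((\<lambda>y. F (a, y)) has_derivative (\<lambda>v. D (0, v))) (at b)"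
proof -
  have "((\<lambda>y. (a, y)) has_derivative (\<lambda>v. (0, v))) (at b)"
    by (auto intro!: derivative_eq_intros)
  from has_derivative_compose[OF this assms[folded at_within_def]] show ?thesis
    by (simp add: o_def)
qed

lemma DERIV_along_line:
  fixes F :: "'a::real_normed_vector \<Rightarrow> real"
  assumes "(F has_derivative D) (at y)"
  shows "DERIV (\<lambda>s. F (y + s *\<^sub>R d)) 0 :> D d"
proof -
  have "((\<lambda>s. y + s *\<^sub>R d) has_derivative (\<lambda>s. s *\<^sub>R d)) (at 0)"
    by (auto intro!: derivative_eq_intros)
  from has_derivative_compose[OF this] assms
  have "((\<lambda>s. F (y + s *\<^sub>R d)) has_derivative (\<lambda>s. D (s *\<^sub>R d))) (at 0)"
    by (simp add: o_def)
  moreover have "(\<lambda>s. D (s *\<^sub>R d)) = (*) (D d)"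
    using has_derivative_bounded_linear[OF assms] by (auto simp: linear_simps mult.commute)
  ultimately show ?thesis unfolding has_field_derivative_def by simp
qed

lemma DERIV_neg_imp_eventually_less:
  fixes \<phi> :: "real \<Rightarrow> real"
  assumes "DERIV \<phi> 0 :> l" and "l < 0"
  shows "\<forall>\<^sub>F s in at_right 0. \<phi> s < \<phi> 0"
proof -
  obtain e where "e > 0" and "\<forall>s>0. s < e \<longrightarrow> \<phi> (0 + s) < \<phi> 0"
    using DERIV_neg_dec_right[OF assms] by blast
  then show ?thesis unfolding eventually_at_right_field by (intro exI[of _ e]) auto
qed

lemma tendsto_inv_blinfun_apply:
  fixes M :: "'b \<Rightarrow> ('a::euclidean_space \<Rightarrow>\<^sub>L 'a)"
  assumes lim: "(M \<longlongrightarrow> M0) F" and bij0: "bij (blinfun_apply M0)"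
    and bij: "\<forall>\<^sub>F t in F. bij (blinfun_apply (M t))"
  shows "((\<lambda>t. inv (blinfun_apply (M t)) w) \<longlongrightarrow> inv (blinfun_apply M0) w) F"
proof -
  obtain g where g: "linear g" "g \<circ> blinfun_apply M0 = id"
    using linear_injective_left_inverse[OF bounded_linear.linear[OF blinfun.bounded_linear_right]] bij0 bij_is_inj by blast
  have inv0: "inv (blinfun_apply M0) = g"
    using g(2) bij0 by (metis bij_betw_def inv_o_cancel left_right_inverse_eq surj_iff)
  define B where "B = Blinfun g"
  have B: "blinfun_apply B = g"
    unfolding B_def using g(1) by (simp add: bounded_linear_Blinfun_apply linear_conv_bounded_linear)
  define z where "z t = inv (blinfun_apply (M t)) w" for t
  define \<epsilon> where "\<epsilon> t = norm B * norm (M t - M0)" for t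
  have \<epsilon>: "(\<epsilon> \<longlongrightarrow> 0) F"
    unfolding \<epsilon>_def by (rule tendsto_mult_right_zero[OF tendsto_norm_zero[OF LIM_zero[OF lim]]])
  have "\<forall>\<^sub>F t in F. norm (z t - g w) \<le> \<epsilon> t * (2 * norm (g w))"
    using bij order_tendstoD(2)[OF \<epsilon>, of "1/2", simplified]
  proof eventually_elim
    case (elim t)
    have "z t - g w = g (blinfun_apply M0 (z t) - blinfun_apply (M t) (z t))"
      using g elim(1) by (simp add: z_def bij_is_surj surj_f_inv_f linear_diff pointfree_idE)
    also have "\<dots> = blinfun_apply B (blinfun_apply (M0 - M t) (z t))"
      by (simp add: B blinfun.diff_left)
    also have "norm \<dots> \<le> norm B * norm (blinfun_apply (M0 - M t) (z t))"
      by (rule norm_blinfun)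
    also have "\<dots> \<le> norm B * (norm (M0 - M t) * norm (z t))"
      by (intro mult_left_mono norm_blinfun norm_ge_zero)
    finally have close: "norm (z t - g w) \<le> \<epsilon> t * norm (z t)"
      by (simp add: \<epsilon>_def norm_minus_commute mult.assoc)
    have "norm (z t) \<le> norm (g w) + norm (z t - g w)"
      by (metis add.commute norm_triangle_sub)
    also have "\<dots> \<le> norm (g w) + 1/2 * norm (z t)"
      using close elim(2) mult_right_mono[of "\<epsilon> t" "1/2" "norm (z t)"] by simp
    finally have "norm (z t) \<le> 2 * norm (g w)" by simp
    then have "\<epsilon> t * norm (z t) \<le> \<epsilon> t * (2 * norm (g w))"
      by (intro mult_left_mono) (simp_all add: \<epsilon>_def)
    with close show ?case by simp
  qed
  moreover have "((\<lambda>t. \<epsilon> t * (2 * norm (g w))) \<longlongrightarrow> 0) F"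
    using tendsto_mult_left_zero[OF \<epsilon>] by simp
  ultimately have "((\<lambda>t. z t - g w) \<longlongrightarrow> 0) F"
    by (rule Lim_null_comparison)
  then show ?thesis unfolding z_def inv0 by (simp add: LIM_zero_iff)
qed

lemma convex_on_sum_fun:
  assumes "finite S" "convex C" "\<And>i. i \<in> S \<Longrightarrow> convex_on C (F i)"
  shows "convex_on C (\<lambda>y. \<Sum>i\<in>S. F i y)"
  using assms by (induction S rule: finite_induct) (auto intro!: convex_on_add simp: convex_on_const)

lemma convex_on_affine: "convex_on UNIV (\<lambda>y. a \<bullet> y + (b::real))"
  by (rule convex_onI) (auto simp: inner_add_right algebra_simps)

lemma convex_on_ge_linearization:
  fixes \<phi> :: "'a::real_normed_vector \<Rightarrow> real"
  assumes cvx: "convex_on UNIV \<phi>" and der: "(\<phi> has_derivative D) (at y)"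
  shows "\<phi> y + D (y' - y) \<le> \<phi> y'"
proof -
  define \<psi> where "\<psi> s = \<phi> (y + s *\<^sub>R (y' - y))" for s
  have "convex_on UNIV \<psi>"
  proof (rule convex_onI)
    fix u s s' :: real assume "0 < u" "u < 1"
    have "\<psi> ((1 - u) *\<^sub>R s + u *\<^sub>R s')
        = \<phi> ((1 - u) *\<^sub>R (y + s *\<^sub>R (y' - y)) + u *\<^sub>R (y + s' *\<^sub>R (y' - y)))"
      by (simp add: \<psi>_def algebra_simps)
    also have "\<dots> \<le> (1 - u) * \<psi> s + u * \<psi> s'"
      using \<open>0 < u\<close> \<open>u < 1\<close> by (auto simp: \<psi>_def intro: convex_onD[OF cvx])
    finally show "\<psi> ((1 - u) *\<^sub>R s + u *\<^sub>R s') \<le> (1 - u) * \<psi> s + u * \<psi> s'" .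
  qed simp
  moreover have "(\<psi> has_field_derivative D (y' - y)) (at 0 within UNIV)"
    unfolding \<psi>_def by (rule DERIV_along_line[OF der])
  ultimately have "D (y' - y) * (1 - 0) \<le> \<psi> 1 - \<psi> 0"
    by (intro convex_on_imp_above_tangent) auto
  then show ?thesis by (simp add: \<psi>_def)
qed

lemma strongly_convex_on_ge_linearization:
  fixes \<psi> :: "'a::real_inner \<Rightarrow> real"
  assumes cvx: "strongly_convex_on UNIV \<psi> c" and der: "(\<psi> has_derivative D) (at y)"
  shows "\<psi> y + D (y' - y) + c/2 * (norm (y' - y))\<^sup>2 \<le> \<psi> y'"
proof -
  have "((\<lambda>y. c/2 * (y \<bullet> y)) has_derivative (\<lambda>w. c/2 * (w \<bullet> y + y \<bullet> w))) (at y)"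
    by (intro derivative_eq_intros) auto
  from has_derivative_diff[OF der this]
  have "((\<lambda>y. \<psi> y - c/2 * (norm y)\<^sup>2) has_derivative (\<lambda>w. D w - c * (y \<bullet> w))) (at y)"
    unfolding power2_norm_eq_inner
    by (rule has_derivative_eq_rhs) (auto simp: fun_eq_iff inner_commute algebra_simps)
  from convex_on_ge_linearization[OF cvx[unfolded strongly_convex_on_def] this, of y']
  show ?thesis
    by (simp add: power2_norm_eq_inner inner_diff_left inner_diff_right inner_commute algebra_simps)
qed

lemma strongly_convex_on_derivative_monotone:
  fixes \<psi> :: "'a::real_inner \<Rightarrow> real"
  assumes cvx: "strongly_convex_on UNIV \<psi> c" and der: "\<And>y. (\<psi> has_derivative D\<psi> y) (at y)"
  shows "D\<psi> y (y' - y) + c * (norm (y' - y))\<^sup>2 \<le> D\<psi> y' (y' - y)"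
proof -
  have "D\<psi> y' (y - y') = - D\<psi> y' (y' - y)"
    by (metis linear_neg has_derivative_linear[OF der] minus_diff_eq)
  then show ?thesis
    using strongly_convex_on_ge_linearization[OF cvx der, of y y']
      strongly_convex_on_ge_linearization[OF cvx der, of y' y]
    by (simp add: norm_minus_commute)
qed

lemma strongly_convex_on_second_derivative_ge:
  fixes \<psi> :: "'a::real_inner \<Rightarrow> real"
  assumes cvx: "strongly_convex_on UNIV \<psi> c"
    and der: "\<And>y. (\<psi> has_derivative D\<psi> y) (at y)"
    and der2: "((\<lambda>y. D\<psi> y v) has_derivative E) (at y0)"
  shows "c * (norm v)\<^sup>2 \<le> E v"
proof (rule ccontr)
  assume "\<not> ?thesis"
  then have neg: "E v - c * (norm v)\<^sup>2 < 0" by simp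
  define \<theta> where "\<theta> s = D\<psi> (y0 + s *\<^sub>R v) v - s * (c * (norm v)\<^sup>2)" for s
  have "DERIV (\<lambda>s. D\<psi> (y0 + s *\<^sub>R v) v) 0 :> E v"
    by (rule DERIV_along_line[OF der2])
  then have "DERIV \<theta> 0 :> E v - c * (norm v)\<^sup>2"
    unfolding \<theta>_def by (auto intro!: derivative_eq_intros)
  from DERIV_neg_dec_right[OF this neg] obtain e where "e > 0"
    and dec: "\<And>s. 0 < s \<Longrightarrow> s < e \<Longrightarrow> \<theta> (0 + s) < \<theta> 0"
    by blast
  have lin: "linear (D\<psi> y)" for y using has_derivative_linear[OF der] .
  have mono: "\<theta> 0 \<le> \<theta> s" if "s > 0" for s
  proof -
    have "D\<psi> y0 (s *\<^sub>R v) + c * (norm (s *\<^sub>R v))\<^sup>2 \<le> D\<psi> (y0 + s *\<^sub>R v) (s *\<^sub>R v)"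
      using strongly_convex_on_derivative_monotone[OF cvx der, of y0 "y0 + s *\<^sub>R v"] by simp
    then have "s * (D\<psi> y0 v + s * (c * (norm v)\<^sup>2)) \<le> s * D\<psi> (y0 + s *\<^sub>R v) v"
      using \<open>s > 0\<close> by (simp add: linear_cmul[OF lin] power_mult_distrib power2_eq_square
          distrib_left mult.assoc mult.left_commute)
    then show ?thesis using that by (simp add: \<theta>_def)
  qed
  have "\<theta> (e/2) < \<theta> 0" using dec[of "e/2"] \<open>e > 0\<close> by simp
  with mono[of "e/2"] \<open>e > 0\<close> show False by simp
qed

lemma bounded_sublevel_strongly_convex:
  fixes \<psi> :: "'a::real_inner \<Rightarrow> real"
  assumes cvx: "strongly_convex_on UNIV \<psi> c" and "c > 0" and der: "(\<psi> has_derivative D) (at y1)"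
  shows "bounded {y. \<psi> y \<le> \<psi> y1}"
proof -
  have "norm (y - y1) \<le> 2 * onorm D / c" if "\<psi> y \<le> \<psi> y1" for y
  proof -
    have "- D (y - y1) \<le> onorm D * norm (y - y1)"
      using onorm[OF has_derivative_bounded_linear[OF der], of "y - y1"] by (simp add: abs_le_iff)
    with that strongly_convex_on_ge_linearization[OF cvx der, of y]
    have "norm (y - y1) * (c/2 * norm (y - y1)) \<le> norm (y - y1) * onorm D"
      by (simp add: power2_eq_square algebra_simps)
    then have "norm (y - y1) = 0 \<or> c/2 * norm (y - y1) \<le> onorm D"
      by (metis mult_le_cancel_left norm_ge_zero order_le_less)
    with \<open>c > 0\<close> show ?thesis
      using onorm_pos_le[OF has_derivative_bounded_linear[OF der]] by (auto simp: field_simps)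
  qed
  then have "{y. \<psi> y \<le> \<psi> y1} \<subseteq> cball y1 (2 * onorm D / c)"
    by (auto simp: dist_norm norm_minus_commute)
  then show ?thesis using bounded_cball bounded_subset by blast
qed

lemma argmin_eq_singleton_by_splitting:
  fixes \<Phi> L R :: "'a::real_normed_vector \<Rightarrow> real"
  assumes "y \<in> S" and split: "\<And>z. z \<in> S \<Longrightarrow> \<Phi> z = L z + R z"
    and L: "\<And>z. z \<in> S \<Longrightarrow> L y + c/2 * (norm (z - y))\<^sup>2 \<le> L z"
    and R: "\<And>z. z \<in> S \<Longrightarrow> R y \<le> R z"
    and c: "0 < c \<or> (\<forall>z\<in>S. R z = R y \<longrightarrow> z = y)" "0 \<le> c"
  shows "{z \<in> S. \<forall>z'\<in>S. \<Phi> z \<le> \<Phi> z'} = {y}"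
proof -
  have L': "L y \<le> L z" if "z \<in> S" for z
  proof -
    have "0 \<le> c/2 * (norm (z - y))\<^sup>2" using \<open>0 \<le> c\<close> by simp
    then show ?thesis using L[OF that] by linarith
  qed
  have "\<Phi> y \<le> \<Phi> z" if "z \<in> S" for z
    using split[OF that] split[OF \<open>y \<in> S\<close>] L'[OF that] R[OF that] by simp
  moreover have "z = y" if "z \<in> S" "\<Phi> z \<le> \<Phi> y" for z
  proof -
    have le: "L z + R z \<le> L y + R y" using that split \<open>y \<in> S\<close> by simp
    show ?thesis
    proof (cases "0 < c")
      case True
      then have "c/2 * (norm (z - y))\<^sup>2 \<le> 0" using le L[OF \<open>z \<in> S\<close>] R[OF \<open>z \<in> S\<close>] by simp
      with True show ?thesis by (simp add: mult_le_0_iff)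
    next
      case False
      then show ?thesis using c le L'[OF \<open>z \<in> S\<close>] R[OF \<open>z \<in> S\<close>] \<open>z \<in> S\<close> by force
    qed
  qed
  ultimately show ?thesis using \<open>y \<in> S\<close> by blast
qed

lemma ln_less_minus_one: "0 < u \<Longrightarrow> u \<noteq> 1 \<Longrightarrow> ln u < u - (1::real)"
proof -
  assume u: "0 < u" "u \<noteq> 1"
  then have "0 < sqrt u" "sqrt u \<noteq> 1" by auto
  have "ln u = 2 * ln (sqrt u)" using u by (simp add: ln_sqrt)
  also have "\<dots> \<le> 2 * (sqrt u - 1)" using ln_le_minus_one[OF \<open>0 < sqrt u\<close>] by simp
  also have "\<dots> < u - 1"
  proof -
    have "0 < (sqrt u - 1)\<^sup>2" using \<open>sqrt u \<noteq> 1\<close> by simp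
    then show ?thesis using u by (simp add: power2_eq_square algebra_simps)
  qed
  finally show ?thesis .
qed

lemma barrier_term_ge:
  fixes t u v :: real
  assumes "0 < t" "0 < u" "0 < v"
  shows "t / v * v - t * ln v \<le> t / v * u - t * ln u"
proof -
  have "ln (u / v) \<le> u / v - 1" using assms by (intro ln_le_minus_one) simp
  then have "t * ln (u / v) \<le> t * (u / v - 1)" using \<open>0 < t\<close> by simp
  then show ?thesis using assms by (simp add: ln_div algebra_simps)
qed

lemma barrier_term_eq_imp_eq:
  fixes t u v :: real
  assumes "0 < t" "0 < u" "0 < v" and "t / v * u - t * ln u = t / v * v - t * ln v"
  shows "u = v"
proof (rule ccontr)
  assume "u \<noteq> v"
  then have "ln (u / v) < u / v - 1" using assms by (intro ln_less_minus_one) auto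
  then have "t * ln (u / v) < t * (u / v - 1)" using \<open>0 < t\<close> by simp
  then show False using assms by (simp add: ln_div algebra_simps)
qed

lemma barrier_sum_ge:
  fixes u v :: "'i \<Rightarrow> real"
  assumes "0 < t" and "\<And>i. i \<in> I \<Longrightarrow> 0 < u i" and "\<And>i. i \<in> I \<Longrightarrow> 0 < v i"
  shows "(\<Sum>i\<in>I. t / v i * v i - t * ln (v i)) \<le> (\<Sum>i\<in>I. t / v i * u i - t * ln (u i))"
  using assms by (intro sum_mono barrier_term_ge) auto

lemma barrier_sum_eq_imp_eq:
  fixes u v :: "'i \<Rightarrow> real"
  assumes "finite I" and "0 < t" and u: "\<And>i. i \<in> I \<Longrightarrow> 0 < u i" and v: "\<And>i. i \<in> I \<Longrightarrow> 0 < v i"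
    and eq: "(\<Sum>i\<in>I. t / v i * u i - t * ln (u i)) = (\<Sum>i\<in>I. t / v i * v i - t * ln (v i))"
    and "j \<in> I"
  shows "u j = v j"
proof -
  have "(\<Sum>i\<in>I. (t / v i * u i - t * ln (u i)) - (t / v i * v i - t * ln (v i))) = 0"
    using eq by (simp add: sum_subtractf)
  then have "(t / v j * u j - t * ln (u j)) - (t / v j * v j - t * ln (v j)) = 0"
  proof (rule sum_nonneg_0[OF \<open>finite I\<close> _ _ \<open>j \<in> I\<close>, rotated])
    fix i assume "i \<in> I"
    show "0 \<le> (t / v i * u i - t * ln (u i)) - (t / v i * v i - t * ln (v i))"
      using barrier_term_ge[OF \<open>0 < t\<close> u[OF \<open>i \<in> I\<close>] v[OF \<open>i \<in> I\<close>]] by simp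
  qed
  then show ?thesis using barrier_term_eq_imp_eq[OF \<open>0 < t\<close> u[OF \<open>j \<in> I\<close>] v[OF \<open>j \<in> I\<close>]] by simp
qed

lemma gbar_eq_lagrangian_plus_barrier:
  "gbar t g h k z = (g z + (\<Sum>i<k. c i * h i z)) + (\<Sum>i<k. c i * (- h i z) - t * ln (- h i z))"
  by (simp add: gbar_def sum_subtractf sum_distrib_left sum_negf)

section \<open>Linear independence, multipliers and polyhedra\<close>

definition lin_indep_on :: "('i \<Rightarrow> 'v::real_vector) \<Rightarrow> 'i set \<Rightarrow> bool" where
  "lin_indep_on a A \<longleftrightarrow> (\<forall>c. (\<Sum>i\<in>A. c i *\<^sub>R a i) = 0 \<longrightarrow> (\<forall>i\<in>A. c i = 0))"

lemma lin_indep_onD: "lin_indep_on a A \<Longrightarrow> (\<Sum>i\<in>A. c i *\<^sub>R a i) = 0 \<Longrightarrow> i \<in> A \<Longrightarrow> c i = 0"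
  unfolding lin_indep_on_def by blast

lemma lin_indep_on_imp_inj_on:
  assumes "finite A" and "lin_indep_on a A"
  shows "inj_on a A"
proof
  fix i i' assume ii: "i \<in> A" "i' \<in> A" "a i = a i'"
  show "i = i'"
  proof (rule ccontr)
    assume "i \<noteq> i'"
    define c where "c l = (if l = i then 1 else if l = i' then -1 else (0::real))" for l
    have "(\<Sum>l\<in>A. c l *\<^sub>R a l) = (\<Sum>l\<in>{i,i'}. c l *\<^sub>R a l)"
      using ii \<open>finite A\<close> by (intro sum.mono_neutral_right) (auto simp: c_def)
    also have "\<dots> = 0" using \<open>i \<noteq> i'\<close> ii by (simp add: c_def)
    finally have "c i = 0" using lin_indep_onD[OF assms(2)] ii by blast
    then show False by (simp add: c_def)
  qed
qed

lemma lin_indep_on_imp_independent: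
  assumes "finite A" and indep: "lin_indep_on a A"
  shows "independent (a ` A)"
proof
  assume "dependent (a ` A)"
  then obtain u where u: "\<exists>v\<in>a ` A. u v \<noteq> 0" "(\<Sum>v\<in>a ` A. u v *\<^sub>R v) = 0"
    using real_vector.dependent_finite[of "a ` A"] \<open>finite A\<close> by auto
  have "(\<Sum>i\<in>A. u (a i) *\<^sub>R a i) = 0"
    using u(2) lin_indep_on_imp_inj_on[OF assms] by (simp add: sum.reindex)
  then have "\<forall>i\<in>A. u (a i) = 0" using lin_indep_onD[OF indep, of "\<lambda>i. u (a i)"] by blast
  with u(1) show False by auto
qed

lemma lin_indep_on_card_le_DIM:
  fixes a :: "'i \<Rightarrow> 'v::euclidean_space"
  assumes "finite A" and "lin_indep_on a A"
  shows "card A \<le> DIM('v)"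
  using independent_bound[OF lin_indep_on_imp_independent[OF assms]]
    card_image[OF lin_indep_on_imp_inj_on[OF assms]] by simp

lemma span_image_eq_sum:
  fixes a :: "'i \<Rightarrow> 'v::real_vector"
  assumes "finite B" and "inj_on a B" and "v \<in> span (a ` B)"
  obtains r where "v = (\<Sum>i\<in>B. r i *\<^sub>R a i)"
proof -
  from assms obtain u where "v = (\<Sum>w\<in>a ` B. u w *\<^sub>R w)"
    using span_finite[of "a ` B"] by auto
  also have "\<dots> = (\<Sum>i\<in>B. u (a i) *\<^sub>R a i)" using assms(2) by (simp add: sum.reindex)
  finally show ?thesis by (rule that)
qed

lemma lin_indep_on_dual_vector:
  fixes a :: "'i \<Rightarrow> 'v::euclidean_space"
  assumes fin: "finite A" and indep: "lin_indep_on a A" and "j \<in> A"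
  obtains d where "a j \<bullet> d = 1" "\<And>i. i \<in> A \<Longrightarrow> i \<noteq> j \<Longrightarrow> a i \<bullet> d = 0"
proof -
  obtain u z where u: "u \<in> span (a ` (A - {j}))"
    and z: "\<And>w. w \<in> span (a ` (A - {j})) \<Longrightarrow> orthogonal z w" and dec: "a j = u + z"
    using orthogonal_subspace_decomp_exists by blast
  have "z \<noteq> 0"
  proof
    assume "z = 0"
    obtain r where r: "u = (\<Sum>i\<in>A - {j}. r i *\<^sub>R a i)"
      using span_image_eq_sum[OF _ _ u] fin lin_indep_on_imp_inj_on[OF fin indep]
      by (meson finite_Diff inj_on_diff)
    define c where "c i = (if i = j then -1 else r i)" for i
    have "(\<Sum>i\<in>A. c i *\<^sub>R a i) = c j *\<^sub>R a j + (\<Sum>i\<in>A - {j}. c i *\<^sub>R a i)"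
      using \<open>j \<in> A\<close> fin by (simp add: sum.remove)
    also have "(\<Sum>i\<in>A - {j}. c i *\<^sub>R a i) = u" unfolding r by (intro sum.cong) (auto simp: c_def)
    finally have "(\<Sum>i\<in>A. c i *\<^sub>R a i) = 0" using dec \<open>z = 0\<close> by (simp add: c_def)
    then have "c j = 0" using lin_indep_onD[OF indep] \<open>j \<in> A\<close> by blast
    then show False by (simp add: c_def)
  qed
  have "u \<bullet> z = 0" using z[OF u] by (simp add: orthogonal_def inner_commute)
  then have "a j \<bullet> ((1 / (z \<bullet> z)) *\<^sub>R z) = 1"
    using \<open>z \<noteq> 0\<close> by (simp add: dec inner_add_left)
  moreover have "a i \<bullet> ((1 / (z \<bullet> z)) *\<^sub>R z) = 0" if "i \<in> A" "i \<noteq> j" for i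
    using z[of "a i"] that by (simp add: span_base orthogonal_def inner_commute)
  ultimately show ?thesis using that by blast
qed

lemma lin_indep_on_dual_basis:
  fixes a :: "'i \<Rightarrow> 'v::euclidean_space"
  assumes "finite A" and "lin_indep_on a A"
  obtains dv where "\<And>i j. i \<in> A \<Longrightarrow> j \<in> A \<Longrightarrow> a i \<bullet> dv j = (if i = j then 1 else 0)"
proof -
  have "\<forall>j\<in>A. \<exists>d. a j \<bullet> d = 1 \<and> (\<forall>i\<in>A. i \<noteq> j \<longrightarrow> a i \<bullet> d = 0)"
    using lin_indep_on_dual_vector[OF assms] by metis
  then obtain dv where "\<And>j. j \<in> A \<Longrightarrow> a j \<bullet> dv j = 1 \<and> (\<forall>i\<in>A. i \<noteq> j \<longrightarrow> a i \<bullet> dv j = 0)"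
    by metis
  then show ?thesis by (intro that[of dv]) auto
qed

lemma nonneg_if_perturbations_nonneg:
  fixes x y :: real
  assumes "\<And>\<epsilon>. 0 < \<epsilon> \<Longrightarrow> 0 \<le> x + \<epsilon> * y"
  shows "0 \<le> x"
proof (rule ccontr)
  assume "\<not> 0 \<le> x"
  define \<epsilon> where "\<epsilon> = - x / (2 * (\<bar>y\<bar> + 1))"
  have "0 < \<epsilon>"
    using \<open>\<not> 0 \<le> x\<close> unfolding \<epsilon>_def by (intro divide_pos_pos) (auto intro: add_nonneg_pos)
  have "\<epsilon> * y \<le> \<epsilon> * (\<bar>y\<bar> + 1)" using \<open>0 < \<epsilon>\<close> by (intro mult_left_mono) auto
  also have "\<dots> = - x / 2"
    using abs_ge_zero[of y] unfolding \<epsilon>_def by (simp add: field_simps)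
  finally show False using assms[OF \<open>0 < \<epsilon>\<close>] \<open>\<not> 0 \<le> x\<close> by simp
qed

lemma lin_indep_on_multipliers_exist:
  fixes a :: "'i \<Rightarrow> 'v::euclidean_space" and b :: 'v
  assumes fin: "finite A" and indep: "lin_indep_on a A"
    and dir: "\<And>d. \<forall>i\<in>A. a i \<bullet> d < 0 \<Longrightarrow> 0 \<le> b \<bullet> d"
  shows "\<exists>lam. (\<forall>i\<in>A. 0 \<le> lam i) \<and> b + (\<Sum>i\<in>A. lam i *\<^sub>R a i) = 0"
proof -
  obtain dv where dv: "\<And>i j. i \<in> A \<Longrightarrow> j \<in> A \<Longrightarrow> a i \<bullet> dv j = (if i = j then 1 else 0)"
    using lin_indep_on_dual_basis[OF fin indep] by blast
  define d0 where "d0 = - (\<Sum>j\<in>A. dv j)"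
  have d0: "a i \<bullet> d0 = -1" if "i \<in> A" for i
  proof -
    have "(\<Sum>j\<in>A. a i \<bullet> dv j) = (\<Sum>j\<in>A. if i = j then 1 else 0)"
      using that dv by (intro sum.cong) auto
    then show ?thesis using fin that by (simp add: d0_def inner_sum_right)
  qed
  have dir_closed: "0 \<le> b \<bullet> d" if "\<forall>i\<in>A. a i \<bullet> d \<le> 0" for d
  proof (rule nonneg_if_perturbations_nonneg)
    fix \<epsilon> :: real assume "0 < \<epsilon>"
    then have "\<forall>i\<in>A. a i \<bullet> (d + \<epsilon> *\<^sub>R d0) < 0"
      using that d0 by (auto simp: inner_add_right)
    then show "0 \<le> b \<bullet> d + \<epsilon> * (b \<bullet> d0)" using dir[of "d + \<epsilon> *\<^sub>R d0"] by (simp add: inner_add_right)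
  qed
  obtain u z where u: "u \<in> span (a ` A)" and z: "\<And>w. w \<in> span (a ` A) \<Longrightarrow> orthogonal z w"
    and dec: "b = u + z"
    using orthogonal_subspace_decomp_exists by blast
  have "a i \<bullet> z = 0" if "i \<in> A" for i
    using z[of "a i"] that by (simp add: span_base orthogonal_def inner_commute)
  then have "b \<bullet> z = 0" using dir_closed[of z] dir_closed[of "- z"] by force
  moreover have "u \<bullet> z = 0" using z[OF u] by (simp add: orthogonal_def inner_commute)
  ultimately have "z = 0" by (simp add: dec inner_add_left)
  obtain r where r: "b = (\<Sum>i\<in>A. r i *\<^sub>R a i)"
    using span_image_eq_sum[OF fin lin_indep_on_imp_inj_on[OF fin indep] u] dec \<open>z = 0\<close> by auto
  have "r j \<le> 0" if "j \<in> A" for j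
  proof -
    have "b \<bullet> dv j = (\<Sum>i\<in>A. r i * (a i \<bullet> dv j))" by (simp add: r inner_sum_left)
    also have "\<dots> = (\<Sum>i\<in>A. if i = j then r i else 0)" using dv that by (intro sum.cong) auto
    also have "\<dots> = r j" using fin that by simp
    finally show ?thesis using dir_closed[of "- dv j"] dv that by auto
  qed
  moreover have "b + (\<Sum>i\<in>A. (- r i) *\<^sub>R a i) = 0" by (simp add: r sum_negf)
  ultimately show ?thesis by (intro exI[of _ "\<lambda>i. - r i"]) auto
qed

lemma bounded_ray_imp_zero:
  fixes d :: "'a::real_normed_vector"
  assumes "bounded S" and ray: "\<And>s. 0 \<le> s \<Longrightarrow> y0 + s *\<^sub>R d \<in> S"
  shows "d = 0"
proof (rule ccontr)
  assume "d \<noteq> 0"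
  obtain B where B: "\<And>y. y \<in> S \<Longrightarrow> norm y \<le> B"
    using \<open>bounded S\<close> unfolding bounded_iff by blast
  define s where "s = (B + norm y0 + 1) / norm d"
  have "norm y0 \<le> B" using B[OF ray[of 0]] by simp
  then have "0 \<le> B" using norm_ge_zero[of y0] by linarith
  then have "0 \<le> s" and "norm (s *\<^sub>R d) = B + norm y0 + 1"
    using \<open>d \<noteq> 0\<close> by (simp_all add: s_def)
  moreover have "norm (s *\<^sub>R d) \<le> norm (y0 + s *\<^sub>R d) + norm y0"
    using norm_triangle_ineq4[of "y0 + s *\<^sub>R d" y0] by simp
  ultimately show False using B[OF ray[OF \<open>0 \<le> s\<close>]] by linarith
qed

lemma ray_exits_bounded_polyhedron:
  fixes \<alpha> :: "'i \<Rightarrow> 'v::real_inner"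
  assumes "finite I" and bdd: "bounded {y. \<forall>i\<in>I. \<alpha> i \<bullet> y + \<beta> i \<le> 0}"
    and y0: "\<forall>i\<in>I. \<alpha> i \<bullet> y0 + \<beta> i \<le> 0" and "d \<noteq> 0"
    and tight: "\<forall>i\<in>I. \<alpha> i \<bullet> y0 + \<beta> i = 0 \<longrightarrow> \<alpha> i \<bullet> d \<le> 0"
  obtains j s where "j \<in> I" "0 \<le> s" "\<alpha> j \<bullet> y0 + \<beta> j < 0" "\<alpha> j \<bullet> (y0 + s *\<^sub>R d) + \<beta> j = 0"
    "\<forall>i\<in>I. \<alpha> i \<bullet> (y0 + s *\<^sub>R d) + \<beta> i \<le> 0"
proof -
  define J where "J = {i\<in>I. 0 < \<alpha> i \<bullet> d}"
  have ray: "\<alpha> i \<bullet> (y0 + s *\<^sub>R d) + \<beta> i \<le> 0" if "i \<in> I" "s * (\<alpha> i \<bullet> d) \<le> - (\<alpha> i \<bullet> y0 + \<beta> i)" for i s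
    using that by (simp add: inner_add_right)
  have outside_J: "s * (\<alpha> i \<bullet> d) \<le> - (\<alpha> i \<bullet> y0 + \<beta> i)" if "i \<in> I - J" "0 \<le> s" for i s
    using that y0 mult_nonneg_nonpos[of s "\<alpha> i \<bullet> d"] by (force simp: J_def)
  have "J \<noteq> {}"
  proof
    assume "J = {}"
    then have "y0 + s *\<^sub>R d \<in> {y. \<forall>i\<in>I. \<alpha> i \<bullet> y + \<beta> i \<le> 0}" if "0 \<le> s" for s
      using ray outside_J that by blast
    with bounded_ray_imp_zero[OF bdd] \<open>d \<noteq> 0\<close> show False by blast
  qed
  define r where "r i = - (\<alpha> i \<bullet> y0 + \<beta> i) / (\<alpha> i \<bullet> d)" for i
  have "finite J" using \<open>finite I\<close> by (simp add: J_def)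
  then have "Min (r ` J) \<in> r ` J" using \<open>J \<noteq> {}\<close> by (intro Min_in) auto
  then obtain j where "j \<in> J" and "r j = Min (r ` J)" by auto
  with \<open>finite J\<close> have j_min: "r j \<le> r i" if "i \<in> J" for i using that by simp
  have dj: "0 < \<alpha> j \<bullet> d" and "j \<in> I" using \<open>j \<in> J\<close> by (auto simp: J_def)
  then have "\<alpha> j \<bullet> y0 + \<beta> j < 0" using y0 tight by force
  then have "0 \<le> r j" using dj by (simp add: r_def)
  show ?thesis
  proof (rule that[of j "r j"])
    show "\<alpha> j \<bullet> (y0 + r j *\<^sub>R d) + \<beta> j = 0" using dj by (simp add: inner_add_right r_def)
    have "r j * (\<alpha> i \<bullet> d) \<le> - (\<alpha> i \<bullet> y0 + \<beta> i)" if "i \<in> J" for i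
    proof -
      have "r j * (\<alpha> i \<bullet> d) \<le> r i * (\<alpha> i \<bullet> d)"
        using j_min[OF that] that by (intro mult_right_mono) (auto simp: J_def)
      then show ?thesis using that by (simp add: r_def J_def)
    qed
    then show "\<forall>i\<in>I. \<alpha> i \<bullet> (y0 + r j *\<^sub>R d) + \<beta> i \<le> 0"
      using ray outside_J \<open>0 \<le> r j\<close> by blast
  qed fact+
qed

section \<open>Partial gradients in the lower-level variable\<close>

definition grad_snd :: "(('a::real_normed_vector \<times> (real^'m)) \<Rightarrow>\<^sub>L real) \<Rightarrow> real^'m" where
  "grad_snd L = (\<chi> j. blinfun_apply L (0, axis j 1))"

lemma grad_snd_inner: "blinfun_apply L (0, v) = grad_snd L \<bullet> v"
proof -
  have lin: "linear (\<lambda>v. blinfun_apply L (0, v))"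
    by (rule bounded_linear.linear) (auto intro!: bounded_linear_intros)
  have "blinfun_apply L (0, v) = blinfun_apply L (0, \<Sum>j\<in>UNIV. v $ j *\<^sub>R axis j 1)"
    using basis_expansion[of v] by (simp add: scalar_mult_eq_scaleR)
  also have "\<dots> = (\<Sum>j\<in>UNIV. v $ j * blinfun_apply L (0, axis j 1))"
    using linear_sum[OF lin, of "\<lambda>j. v $ j *\<^sub>R axis j 1" UNIV] linear_cmul[OF lin] by simp
  also have "\<dots> = grad_snd L \<bullet> v" by (simp add: grad_snd_def inner_vec_def mult.commute)
  finally show ?thesis .
qed

lemma grad_snd_zero: "grad_snd 0 = 0"
  by (simp add: grad_snd_def vec_eq_iff)

lemma grad_snd_eqI: "(\<And>v. blinfun_apply L (0, v) = a \<bullet> v) \<Longrightarrow> grad_snd L = a"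
  by (simp add: grad_snd_def vec_eq_iff inner_axis)

lemma has_derivative_grad_snd:
  assumes "(L has_derivative L') (at p)"
  shows "((\<lambda>p. grad_snd (L p)) has_derivative (\<lambda>w. grad_snd (L' w))) (at p)"
  unfolding grad_snd_def
  by (intro has_derivative_vec_lambda bounded_linear.has_derivative[OF blinfun.bounded_linear_left assms])

lemma continuous_on_grad_snd: "continuous_on S L \<Longrightarrow> continuous_on S (\<lambda>p. grad_snd (L p))"
  unfolding grad_snd_def by (intro continuous_on_vec_lambda blinfun.continuous_on continuous_on_const)

lemma Dy_eq_grad_snd:
  assumes "(F has_derivative blinfun_apply L) (at (x, y))"
  shows "Dy F x y v = grad_snd L \<bullet> v"
proof -
  have "Dy F x y = (\<lambda>v. blinfun_apply L (0, v))"
    unfolding Dy_def using has_derivative_slice_snd[OF assms] frechet_derivative_at by metis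
  then show ?thesis by (simp add: grad_snd_inner)
qed

lemma grad_snd_affine:
  fixes F :: "('a::real_normed_vector \<times> (real^'m)) \<Rightarrow> real"
  assumes der: "(F has_derivative blinfun_apply L) (at (x, y))"
    and aff: "\<And>y. F (x, y) = a \<bullet> y + b"
  shows "grad_snd L = a"
proof -
  have "((\<lambda>y. F (x, y)) has_derivative (\<lambda>v. a \<bullet> v)) (at y)"
    unfolding aff by (auto intro!: derivative_eq_intros)
  from has_derivative_unique[OF has_derivative_slice_snd[OF der] this] show ?thesis
    by (intro grad_snd_eqI) (simp add: fun_eq_iff)
qed

lemma second_derivative_snd_eq_0_if_const:
  fixes F' :: "('a::real_normed_vector \<times> 'b::real_normed_vector) \<Rightarrow> (('a \<times> 'b) \<Rightarrow>\<^sub>L real)"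
  assumes der: "(F' has_derivative blinfun_apply M) (at (x, y))"
    and const: "\<And>y. blinfun_apply (F' (x, y)) (0, v) = c"
  shows "blinfun_apply (blinfun_apply M (0, d)) (0, v) = 0"
proof -
  have "((\<lambda>y. blinfun_apply (F' (x, y)) (0, v)) has_derivative
      (\<lambda>d. blinfun_apply (blinfun_apply M (0, d)) (0, v))) (at y)"
    using has_derivative_slice_snd[OF bounded_linear.has_derivative[OF blinfun.bounded_linear_left der]] .
  moreover have "((\<lambda>y. blinfun_apply (F' (x, y)) (0, v)) has_derivative (\<lambda>d. 0)) (at y)"
    unfolding const by simp
  ultimately show ?thesis using has_derivative_unique by metis
qed

section \<open>The lower-level problem at an SCSC point\<close>

locale bilevel_point =
  fixes f g :: "((real^'n) \<times> (real^'m)) \<Rightarrow> real"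
    and h :: "nat \<Rightarrow> ((real^'n) \<times> (real^'m)) \<Rightarrow> real"
    and k :: nat and X :: "(real^'n) set" and \<mu>g :: real and x :: "real^'n"
    and F' G' :: "((real^'n) \<times> (real^'m)) \<Rightarrow> (((real^'n) \<times> (real^'m)) \<Rightarrow>\<^sub>L real)"
    and G'' :: "((real^'n) \<times> (real^'m)) \<Rightarrow> (((real^'n) \<times> (real^'m)) \<Rightarrow>\<^sub>L (((real^'n) \<times> (real^'m)) \<Rightarrow>\<^sub>L real))"
    and H' :: "nat \<Rightarrow> ((real^'n) \<times> (real^'m)) \<Rightarrow> (((real^'n) \<times> (real^'m)) \<Rightarrow>\<^sub>L real)"
    and H'' :: "nat \<Rightarrow> ((real^'n) \<times> (real^'m)) \<Rightarrow> (((real^'n) \<times> (real^'m)) \<Rightarrow>\<^sub>L (((real^'n) \<times> (real^'m)) \<Rightarrow>\<^sub>L real))"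
  assumes f_deriv: "\<And>z. (f has_derivative blinfun_apply (F' z)) (at z)"
    and F'_cont: "continuous_on UNIV F'"
    and g_deriv: "\<And>z. (g has_derivative blinfun_apply (G' z)) (at z)"
    and G'_deriv: "\<And>z. (G' has_derivative blinfun_apply (G'' z)) (at z)"
    and G''_cont: "continuous_on UNIV G''"
    and h_deriv: "\<And>i z. i < k \<Longrightarrow> (h i has_derivative blinfun_apply (H' i z)) (at z)"
    and H'_deriv: "\<And>i z. i < k \<Longrightarrow> (H' i has_derivative blinfun_apply (H'' i z)) (at z)"
    and H''_cont: "\<And>i. i < k \<Longrightarrow> continuous_on UNIV (H'' i)"
    and strictly_feasible: "\<forall>x\<in>X. \<exists>y. \<forall>i<k. h i (x, y) < 0"
    and LICQ_on_X: "\<forall>x\<in>X. \<forall>y\<in>ystar g h k x. LICQ h k x y"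
    and SC_or_LIN:
      "(\<mu>g > 0 \<and> (\<forall>x\<in>X. strongly_convex_on UNIV (\<lambda>y. g (x, y)) \<mu>g
                         \<and> (\<forall>i<k. convex_on UNIV (\<lambda>y. h i (x, y)))))
       \<or> (\<forall>x\<in>X. (\<exists>a b. \<forall>y. g (x, y) = a \<bullet> y + b)
                 \<and> (\<forall>i<k. \<exists>a b. \<forall>y. h i (x, y) = a \<bullet> y + b)
                 \<and> compact (Yset h k x))"
    and x_in_X: "x \<in> X"
    and SCSC_at_x: "SCSC_point g h k x"
begin

definition SC_case :: bool where
  "SC_case \<longleftrightarrow> \<mu>g > 0 \<and> (\<forall>x\<in>X. strongly_convex_on UNIV (\<lambda>y. g (x, y)) \<mu>g
                         \<and> (\<forall>i<k. convex_on UNIV (\<lambda>y. h i (x, y))))"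

text \<open>The linear case is treated as strong convexity with modulus \<open>0\<close>.\<close>
definition modulus :: real where
  "modulus = (if SC_case then \<mu>g else 0)"

lemma modulus_nonneg: "0 \<le> modulus"
  by (simp add: modulus_def SC_case_def)

lemma modulus_pos_iff: "0 < modulus \<longleftrightarrow> SC_case"
  by (simp add: modulus_def SC_case_def)

lemma LIN_case:
  assumes "\<not> SC_case" and "x' \<in> X"
  obtains \<gamma> c0 \<alpha> \<beta> where "\<And>y. g (x', y) = \<gamma> \<bullet> y + c0"
    and "\<And>i y. i < k \<Longrightarrow> h i (x', y) = \<alpha> i \<bullet> y + \<beta> i" and "compact (Yset h k x')"
proof -
  have "(\<exists>a b. \<forall>y. g (x', y) = a \<bullet> y + b) \<and> (\<forall>i<k. \<exists>a b. \<forall>y. h i (x', y) = a \<bullet> y + b)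
      \<and> compact (Yset h k x')"
    using SC_or_LIN assms unfolding SC_case_def by blast
  then show ?thesis using that by metis
qed

lemma grad_snd_G'_LIN:
  assumes "\<And>y. g (x', y) = \<gamma> \<bullet> y + c0"
  shows "grad_snd (G' (x', y)) = \<gamma>"
  using grad_snd_affine[OF g_deriv assms] .

lemma grad_snd_H'_LIN:
  assumes "i < k" and "\<And>y. h i (x', y) = \<alpha> \<bullet> y + \<beta>"
  shows "grad_snd (H' i (x', y)) = \<alpha>"
  using grad_snd_affine[OF h_deriv[OF assms(1)] assms(2)] .

lemma strongly_convex_g:
  assumes "x' \<in> X"
  shows "strongly_convex_on UNIV (\<lambda>y. g (x', y)) modulus"
proof (cases SC_case)
  case True
  then show ?thesis using assms by (simp add: SC_case_def modulus_def)
next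
  case False
  then obtain \<gamma> c0 where "\<And>y. g (x', y) = \<gamma> \<bullet> y + c0" using LIN_case assms by metis
  then show ?thesis using False by (simp add: strongly_convex_on_def modulus_def convex_on_affine)
qed

lemma convex_h:
  assumes "x' \<in> X" and "i < k"
  shows "convex_on UNIV (\<lambda>y. h i (x', y))"
proof (cases SC_case)
  case True
  then show ?thesis using assms by (simp add: SC_case_def)
next
  case False
  then obtain \<alpha> \<beta> where "\<And>y. h i (x', y) = \<alpha> i \<bullet> y + \<beta> i" using LIN_case assms by metis
  then show ?thesis by (simp add: convex_on_affine)
qed

lemma g_deriv_snd: "((\<lambda>y. g (x', y)) has_derivative (\<lambda>v. grad_snd (G' (x', y)) \<bullet> v)) (at y)"
  using has_derivative_slice_snd[OF g_deriv] by (simp add: grad_snd_inner)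

lemma h_deriv_snd: "i < k \<Longrightarrow> ((\<lambda>y. h i (x', y)) has_derivative (\<lambda>v. grad_snd (H' i (x', y)) \<bullet> v)) (at y)"
  using has_derivative_slice_snd[OF h_deriv] by (simp add: grad_snd_inner)

lemma continuous_on_h_snd: "i < k \<Longrightarrow> continuous_on UNIV (\<lambda>y. h i (x', y))"
  using h_deriv_snd has_derivative_continuous by (blast intro: continuous_at_imp_continuous_on)

lemma closed_Yset: "closed (Yset h k x')"
proof -
  have "Yset h k x' = (\<Inter>i<k. {y. h i (x', y) \<le> 0})" by (auto simp: Yset_def)
  then show ?thesis
    using continuous_on_h_snd by (auto intro!: closed_INT closed_Collect_le continuous_on_const)
qed

lemma lagrangian_ge:
  assumes "x' \<in> X" and nonneg: "\<forall>i<k. 0 \<le> \<nu> i"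
    and stat: "grad_snd (G' (x', y)) + (\<Sum>i<k. \<nu> i *\<^sub>R grad_snd (H' i (x', y))) = 0"
  shows "g (x', y) + (\<Sum>i<k. \<nu> i * h i (x', y)) + modulus/2 * (norm (y' - y))\<^sup>2
       \<le> g (x', y') + (\<Sum>i<k. \<nu> i * h i (x', y'))"
proof -
  define L where "L z = g (x', z) + (\<Sum>i<k. \<nu> i * h i (x', z))" for z
  have "convex_on UNIV (\<lambda>z. (g (x', z) - modulus/2 * (norm z)\<^sup>2) + (\<Sum>i<k. \<nu> i * h i (x', z)))"
    using strongly_convex_g[OF \<open>x' \<in> X\<close>] convex_h[OF \<open>x' \<in> X\<close>] nonneg
    unfolding strongly_convex_on_def by (intro convex_on_add convex_on_sum_fun convex_on_cmul) auto
  then have "strongly_convex_on UNIV L modulus"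
    unfolding strongly_convex_on_def L_def by (simp add: algebra_simps)
  moreover have "(L has_derivative (\<lambda>v. 0)) (at y)"
  proof -
    have "(L has_derivative (\<lambda>v. grad_snd (G' (x', y)) \<bullet> v
        + (\<Sum>i<k. \<nu> i * (grad_snd (H' i (x', y)) \<bullet> v)))) (at y)"
      unfolding L_def
      by (intro has_derivative_add has_derivative_sum has_derivative_mult_right g_deriv_snd h_deriv_snd)
        auto
    moreover have "grad_snd (G' (x', y)) \<bullet> v + (\<Sum>i<k. \<nu> i * (grad_snd (H' i (x', y)) \<bullet> v)) = 0" for v
      using arg_cong[OF stat, of "\<lambda>w. w \<bullet> v"] by (simp add: inner_add_left inner_sum_left)
    ultimately show ?thesis by simp
  qed
  ultimately show ?thesis using strongly_convex_on_ge_linearization by (fastforce simp: L_def)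
qed

lemma hessian_g_ge:
  assumes "x' \<in> X"
  shows "modulus * (norm v)\<^sup>2 \<le> blinfun_apply (blinfun_apply (G'' (x', y)) (0, v)) (0, v)"
  by (rule strongly_convex_on_second_derivative_ge[OF strongly_convex_g[OF assms]
        has_derivative_slice_snd[OF g_deriv]
        has_derivative_slice_snd[OF bounded_linear.has_derivative[OF blinfun.bounded_linear_left G'_deriv]]])

lemma hessian_h_nonneg:
  assumes "x' \<in> X" and "i < k"
  shows "0 \<le> blinfun_apply (blinfun_apply (H'' i (x', y)) (0, v)) (0, v)"
  using strongly_convex_on_second_derivative_ge[of "\<lambda>y. h i (x', y)" 0,
      OF _ has_derivative_slice_snd[OF h_deriv[OF assms(2)]]
      has_derivative_slice_snd[OF bounded_linear.has_derivative[OF blinfun.bounded_linear_left H'_deriv[OF assms(2)]]]]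
    convex_h[OF assms] by (simp add: strongly_convex_on_def)

lemma LIN_second_derivatives_vanish:
  assumes "\<not> SC_case" and "x' \<in> X"
  shows "grad_snd (blinfun_apply (G'' (x', y)) (0, d)) = 0"
    and "i < k \<Longrightarrow> grad_snd (blinfun_apply (H'' i (x', y)) (0, d)) = 0"
proof -
  obtain \<gamma> c0 \<alpha> \<beta> where g_aff: "\<And>y. g (x', y) = \<gamma> \<bullet> y + c0"
    and h_aff: "\<And>i y. i < k \<Longrightarrow> h i (x', y) = \<alpha> i \<bullet> y + \<beta> i"
    using LIN_case[OF assms] by metis
  have "blinfun_apply (blinfun_apply (G'' (x', y)) (0, d)) (0, v) = 0" for v
    by (rule second_derivative_snd_eq_0_if_const[OF G'_deriv, where c = "\<gamma> \<bullet> v"])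
      (simp add: grad_snd_inner grad_snd_G'_LIN[OF g_aff])
  then show "grad_snd (blinfun_apply (G'' (x', y)) (0, d)) = 0"
    by (intro grad_snd_eqI) simp
  assume "i < k"
  have "blinfun_apply (blinfun_apply (H'' i (x', y)) (0, d)) (0, v) = 0" for v
    by (rule second_derivative_snd_eq_0_if_const[OF H'_deriv[OF \<open>i < k\<close>], where c = "\<alpha> i \<bullet> v"])
      (simp add: grad_snd_inner grad_snd_H'_LIN[OF \<open>i < k\<close> h_aff[OF \<open>i < k\<close>]])
  then show "grad_snd (blinfun_apply (H'' i (x', y)) (0, d)) = 0"
    by (intro grad_snd_eqI) simp
qed

lemma ystar_nonempty: "\<exists>y. y \<in> ystar g h k x"
proof -
  obtain y1 where "\<forall>i<k. h i (x, y1) < 0" using strictly_feasible x_in_X by blast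
  then have y1: "y1 \<in> Yset h k x" by (auto simp: Yset_def less_imp_le)
  define S where "S = Yset h k x \<inter> {y. g (x, y) \<le> g (x, y1)}"
  have cont: "continuous_on UNIV (\<lambda>y. g (x, y))"
    using g_deriv_snd has_derivative_continuous by (blast intro: continuous_at_imp_continuous_on)
  have "closed S"
    unfolding S_def using cont by (intro closed_Int closed_Yset closed_Collect_le) auto
  moreover have "bounded S"
  proof (cases SC_case)
    case True
    then have "bounded {y. g (x, y) \<le> g (x, y1)}"
      using bounded_sublevel_strongly_convex[OF strongly_convex_g[OF x_in_X] _ g_deriv_snd]
      by (simp add: modulus_pos_iff)
    then show ?thesis unfolding S_def by (rule bounded_subset) auto
  next
    case False
    then show ?thesis
      using LIN_case[OF False x_in_X] compact_imp_bounded bounded_subset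
      unfolding S_def by (metis inf_le1)
  qed
  ultimately have "compact S" by (simp add: compact_eq_bounded_closed)
  have "y1 \<in> S" using y1 by (simp add: S_def)
  have "\<exists>y0\<in>S. \<forall>y\<in>S. g (x, y0) \<le> g (x, y)"
    using \<open>y1 \<in> S\<close> continuous_on_subset[OF cont]
    by (intro continuous_attains_inf[OF \<open>compact S\<close>]) auto
  then obtain y0 where "y0 \<in> S" and min: "\<And>y. y \<in> S \<Longrightarrow> g (x, y0) \<le> g (x, y)"
    by blast
  then have "y0 \<in> ystar g h k x"
    using min[OF \<open>y1 \<in> S\<close>] by (force simp: ystar_def S_def)
  then show ?thesis ..
qed

definition y0 :: "real^'m" where
  "y0 = (SOME y. y \<in> ystar g h k x)"

lemma y0_ystar: "y0 \<in> ystar g h k x"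
  unfolding y0_def using ystar_nonempty by (rule someI_ex)

lemma y0_feasible: "i < k \<Longrightarrow> h i (x, y0) \<le> 0"
  using y0_ystar by (simp add: ystar_def Yset_def)

definition active :: "nat set" where
  "active = {i. i < k \<and> h i (x, y0) = 0}"

lemma active_subset: "active \<subseteq> {..<k}" and finite_active: "finite active"
  by (auto simp: active_def)

lemma inactive_neg: "i < k \<Longrightarrow> i \<notin> active \<Longrightarrow> h i (x, y0) < 0"
  using y0_feasible by (force simp: active_def)

definition grad_h0 :: "nat \<Rightarrow> real^'m" where
  "grad_h0 i = grad_snd (H' i (x, y0))"

lemma lin_indep_active: "lin_indep_on grad_h0 active"
  unfolding lin_indep_on_def
proof (intro allI impI)
  fix c assume sum0: "(\<Sum>i\<in>active. c i *\<^sub>R grad_h0 i) = 0"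
  have "(\<Sum>i\<in>{i. i < k \<and> h i (x, y0) = 0}. c i * Dy (h i) x y0 v) = 0" for v
  proof -
    have "(\<Sum>i\<in>{i. i < k \<and> h i (x, y0) = 0}. c i * Dy (h i) x y0 v) = (\<Sum>i\<in>active. c i *\<^sub>R grad_h0 i) \<bullet> v"
      by (auto simp: active_def grad_h0_def Dy_eq_grad_snd[OF h_deriv] inner_sum_left intro!: sum.cong)
    then show ?thesis using sum0 by simp
  qed
  moreover have "LICQ h k x y0" using LICQ_on_X x_in_X y0_ystar by blast
  ultimately show "\<forall>i\<in>active. c i = 0" unfolding LICQ_def active_def by blast
qed

lemma card_active_le: "card active \<le> CARD('m)"
  using lin_indep_on_card_le_DIM[OF finite_active lin_indep_active] by simp

lemma no_feasible_descent:
  assumes d: "\<forall>i\<in>active. grad_h0 i \<bullet> d < 0"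
  shows "0 \<le> grad_snd (G' (x, y0)) \<bullet> d"
proof (rule ccontr)
  assume neg: "\<not> ?thesis"
  have "\<forall>\<^sub>F s in at_right 0. h i (x, y0 + s *\<^sub>R d) < 0" if "i < k" for i
  proof -
    have D: "DERIV (\<lambda>s. h i (x, y0 + s *\<^sub>R d)) 0 :> grad_h0 i \<bullet> d"
      unfolding grad_h0_def by (rule DERIV_along_line[OF h_deriv_snd[OF that]])
    show ?thesis
    proof (cases "i \<in> active")
      case True
      then show ?thesis
        using DERIV_neg_imp_eventually_less[OF D] d by (simp add: active_def)
    next
      case False
      have "((\<lambda>s. h i (x, y0 + s *\<^sub>R d)) \<longlongrightarrow> h i (x, y0)) (at_right 0)"
        using DERIV_isCont[OF D] by (simp add: isCont_def filterlim_at_split)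
      then show ?thesis using inactive_neg[OF that False] by (rule order_tendstoD)
    qed
  qed
  then have "\<forall>\<^sub>F s in at_right 0. \<forall>i\<in>{..<k}. h i (x, y0 + s *\<^sub>R d) < 0"
    by (intro eventually_ball_finite) auto
  moreover have "\<forall>\<^sub>F s in at_right 0. g (x, y0 + s *\<^sub>R d) < g (x, y0)"
    using DERIV_neg_imp_eventually_less[OF DERIV_along_line[OF g_deriv_snd]] neg by simp
  ultimately have "\<forall>\<^sub>F s in at_right 0. (\<forall>i\<in>{..<k}. h i (x, y0 + s *\<^sub>R d) < 0)
      \<and> g (x, y0 + s *\<^sub>R d) < g (x, y0)"
    by (rule eventually_conj)
  then obtain s where "\<forall>i<k. h i (x, y0 + s *\<^sub>R d) < 0" "g (x, y0 + s *\<^sub>R d) < g (x, y0)"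
    using eventually_happens'[OF trivial_limit_at_right_real] by blast
  then have "y0 + s *\<^sub>R d \<in> Yset h k x" by (auto simp: Yset_def less_imp_le)
  with y0_ystar have "g (x, y0) \<le> g (x, y0 + s *\<^sub>R d)" by (simp add: ystar_def)
  with \<open>g (x, y0 + s *\<^sub>R d) < g (x, y0)\<close> show False by simp
qed

definition lam :: "nat \<Rightarrow> real" where
  "lam = (SOME lam. (\<forall>i. 0 \<le> lam i \<and> (i \<notin> active \<longrightarrow> lam i = 0))
      \<and> grad_snd (G' (x, y0)) + (\<Sum>i<k. lam i *\<^sub>R grad_h0 i) = 0)"

lemma lam_spec: "\<forall>i. 0 \<le> lam i \<and> (i \<notin> active \<longrightarrow> lam i = 0)"
  and stationary_y0: "grad_snd (G' (x, y0)) + (\<Sum>i<k. lam i *\<^sub>R grad_snd (H' i (x, y0))) = 0"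
proof -
  obtain c where "\<forall>i\<in>active. 0 \<le> c i" "grad_snd (G' (x, y0)) + (\<Sum>i\<in>active. c i *\<^sub>R grad_h0 i) = 0"
    using lin_indep_on_multipliers_exist[OF finite_active lin_indep_active no_feasible_descent] by blast
  moreover have "(\<Sum>i\<in>active. c i *\<^sub>R grad_h0 i) = (\<Sum>i<k. (if i \<in> active then c i else 0) *\<^sub>R grad_h0 i)"
    using active_subset by (intro sum.mono_neutral_cong_left) auto
  ultimately have "\<exists>lam. (\<forall>i. 0 \<le> lam i \<and> (i \<notin> active \<longrightarrow> lam i = 0))
      \<and> grad_snd (G' (x, y0)) + (\<Sum>i<k. lam i *\<^sub>R grad_h0 i) = 0"
    by (intro exI[of _ "\<lambda>i. if i \<in> active then c i else 0"]) auto
  from someI_ex[OF this] show "\<forall>i. 0 \<le> lam i \<and> (i \<notin> active \<longrightarrow> lam i = 0)"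
    and "grad_snd (G' (x, y0)) + (\<Sum>i<k. lam i *\<^sub>R grad_snd (H' i (x, y0))) = 0"
    unfolding lam_def grad_h0_def by blast+
qed

lemma lam_nonneg: "0 \<le> lam i" and lam_inactive: "i \<notin> active \<Longrightarrow> lam i = 0"
  using lam_spec by auto

lemma KKT_mult_if_stationary:
  assumes "\<forall>i<k. 0 \<le> \<nu> i \<and> \<nu> i * h i (x', y) = 0"
    and "grad_snd (G' (x', y)) + (\<Sum>i<k. \<nu> i *\<^sub>R grad_snd (H' i (x', y))) = 0"
  shows "KKT_mult g h k x' y \<nu>"
proof -
  have "Dy g x' y v + (\<Sum>i<k. \<nu> i * Dy (h i) x' y v)
      = (grad_snd (G' (x', y)) + (\<Sum>i<k. \<nu> i *\<^sub>R grad_snd (H' i (x', y)))) \<bullet> v" for v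
    by (simp add: Dy_eq_grad_snd[OF g_deriv] Dy_eq_grad_snd[OF h_deriv] inner_add_left inner_sum_left)
  with assms show ?thesis unfolding KKT_mult_def by simp
qed

lemma KKT_y0: "KKT_mult g h k x y0 lam"
  using lam_nonneg lam_inactive stationary_y0 by (intro KKT_mult_if_stationary) (auto simp: active_def)

lemma lam_active_pos: "i \<in> active \<Longrightarrow> 0 < lam i"
  using SCSC_at_x KKT_y0 y0_ystar unfolding SCSC_point_def active_def by blast

definition active_determines :: "real^'n \<Rightarrow> bool" where
  "active_determines x' \<longleftrightarrow> (\<forall>y y'. (\<forall>i\<in>active. h i (x', y') = h i (x', y)) \<longrightarrow> y' = y)"

lemma LIN_shifted_solution:
  assumes "\<not> SC_case" and same: "\<forall>i\<in>active. h i (x, y0 + d) = h i (x, y0)"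
    and feasible: "y0 + d \<in> Yset h k x"
  shows "y0 + d \<in> ystar g h k x" and "KKT_mult g h k x (y0 + d) lam"
proof -
  obtain \<gamma> c0 \<alpha> \<beta> where g_aff: "\<And>y. g (x, y) = \<gamma> \<bullet> y + c0"
    and h_aff: "\<And>i y. i < k \<Longrightarrow> h i (x, y) = \<alpha> i \<bullet> y + \<beta> i"
    using LIN_case[OF assms(1) x_in_X] by metis
  have stat: "\<gamma> + (\<Sum>i<k. lam i *\<^sub>R \<alpha> i) = 0"
    using stationary_y0 by (simp add: grad_snd_G'_LIN[OF g_aff] grad_snd_H'_LIN[OF _ h_aff])
  have slack: "lam i * (\<alpha> i \<bullet> d) = 0" if "i < k" for i
    using same lam_inactive[of i] that by (cases "i \<in> active") (auto simp: h_aff inner_add_right)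
  have "\<gamma> \<bullet> d = - (\<Sum>i<k. lam i * (\<alpha> i \<bullet> d))"
    using arg_cong[OF stat, of "\<lambda>w. w \<bullet> d"] by (simp add: inner_add_left inner_sum_left eq_neg_iff_add_eq_0)
  then have "g (x, y0 + d) = g (x, y0)" by (simp add: g_aff inner_add_right slack)
  then show "y0 + d \<in> ystar g h k x" using y0_ystar feasible by (simp add: ystar_def)
  show "KKT_mult g h k x (y0 + d) lam"
  proof (rule KKT_mult_if_stationary)
    show "\<forall>i<k. 0 \<le> lam i \<and> lam i * h i (x, y0 + d) = 0"
      using same lam_nonneg lam_inactive by (auto simp: active_def)
    show "grad_snd (G' (x, y0 + d)) + (\<Sum>i<k. lam i *\<^sub>R grad_snd (H' i (x, y0 + d))) = 0"
      using stat by (simp add: grad_snd_G'_LIN[OF g_aff] grad_snd_H'_LIN[OF _ h_aff])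
  qed
qed

text \<open>
  Otherwise, moving from \<open>y0\<close> in a direction that keeps the active constraints fixed stays optimal
  until some inactive constraint becomes active; its multiplier there is zero, contradicting SCSC.
\<close>
lemma LIN_active_determines_x:
  assumes "\<not> SC_case"
  shows "active_determines x"
  unfolding active_determines_def
proof (intro allI impI)
  fix y y' assume same: "\<forall>i\<in>active. h i (x, y') = h i (x, y)"
  define d where "d = y' - y"
  obtain \<gamma> c0 \<alpha> \<beta> where h_aff: "\<And>i y. i < k \<Longrightarrow> h i (x, y) = \<alpha> i \<bullet> y + \<beta> i"
    and "compact (Yset h k x)"
    using LIN_case[OF assms x_in_X] by metis
  have Yset: "Yset h k x = {y. \<forall>i\<in>{..<k}. \<alpha> i \<bullet> y + \<beta> i \<le> 0}"
    by (auto simp: Yset_def h_aff)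
  have \<alpha>d: "\<alpha> i \<bullet> d = 0" if "i \<in> active" for i
    using same that active_subset by (force simp: h_aff d_def inner_diff_right)
  show "y' = y"
  proof (rule ccontr)
    assume "y' \<noteq> y"
    then have "d \<noteq> 0" by (simp add: d_def)
    have "bounded {y. \<forall>i\<in>{..<k}. \<alpha> i \<bullet> y + \<beta> i \<le> 0}"
      using \<open>compact (Yset h k x)\<close> unfolding Yset by (rule compact_imp_bounded)
    moreover have "\<forall>i\<in>{..<k}. \<alpha> i \<bullet> y0 + \<beta> i \<le> 0" using y0_feasible by (simp add: h_aff)
    moreover have "\<forall>i\<in>{..<k}. \<alpha> i \<bullet> y0 + \<beta> i = 0 \<longrightarrow> \<alpha> i \<bullet> d \<le> 0"
      using \<alpha>d by (simp add: h_aff active_def)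
    ultimately obtain j s where "j \<in> {..<k}" "0 \<le> s" "\<alpha> j \<bullet> y0 + \<beta> j < 0"
      "\<alpha> j \<bullet> (y0 + s *\<^sub>R d) + \<beta> j = 0" "\<forall>i\<in>{..<k}. \<alpha> i \<bullet> (y0 + s *\<^sub>R d) + \<beta> i \<le> 0"
      by (rule ray_exits_bounded_polyhedron[OF finite_lessThan _ _ \<open>d \<noteq> 0\<close>])
    then have "j < k" and "j \<notin> active" and "h j (x, y0 + s *\<^sub>R d) = 0"
      and feasible: "y0 + s *\<^sub>R d \<in> Yset h k x"
      by (simp_all add: h_aff Yset active_def)
    moreover have "\<forall>i\<in>active. h i (x, y0 + s *\<^sub>R d) = h i (x, y0)"
      using \<alpha>d active_subset by (auto simp: h_aff inner_add_right)
    ultimately have "0 < lam j"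
      using SCSC_at_x LIN_shifted_solution[OF assms] unfolding SCSC_point_def by blast
    with \<open>j \<notin> active\<close> show False using lam_inactive by simp
  qed
qed

lemma second_order_uniqueness:
  assumes tangent: "\<forall>i\<in>active. grad_h0 i \<bullet> dy = 0"
    and curv: "blinfun_apply (blinfun_apply (G'' (x, y0)) (0, dy)) (0, dy)
      + (\<Sum>i<k. lam i * blinfun_apply (blinfun_apply (H'' i (x, y0)) (0, dy)) (0, dy)) \<le> 0"
  shows "dy = 0"
proof (cases SC_case)
  case True
  have "0 \<le> (\<Sum>i<k. lam i * blinfun_apply (blinfun_apply (H'' i (x, y0)) (0, dy)) (0, dy))"
    using hessian_h_nonneg[OF x_in_X] lam_nonneg by (intro sum_nonneg mult_nonneg_nonneg) auto
  with curv hessian_g_ge[OF x_in_X, of dy y0] have "modulus * (norm dy)\<^sup>2 \<le> 0" by linarith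
  with True show ?thesis by (simp add: mult_le_0_iff modulus_pos_iff[symmetric])
next
  case False
  obtain \<gamma> c0 \<alpha> \<beta> where h_aff: "\<And>i y. i < k \<Longrightarrow> h i (x, y) = \<alpha> i \<bullet> y + \<beta> i"
    using LIN_case[OF False x_in_X] by metis
  have "h i (x, y0 + dy) = h i (x, y0)" if "i \<in> active" for i
    using that tangent active_subset grad_snd_H'_LIN[OF _ h_aff]
    by (force simp: h_aff grad_h0_def inner_add_right)
  then have "y0 + dy = y0"
    using LIN_active_determines_x[OF False] unfolding active_determines_def by blast
  then show ?thesis by simp
qed

end

section \<open>The reduced KKT map\<close>

type_synonym ('n, 'm) kkt_var = "((real^'n) \<times> real) \<times> ((real^'m) \<times> (real^'m))"

definition xy_of :: "('n, 'm) kkt_var \<Rightarrow> (real^'n) \<times> (real^'m)" where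
  "xy_of p = (fst (fst p), fst (snd p))"

definition t_of :: "('n, 'm) kkt_var \<Rightarrow> real" where
  "t_of p = snd (fst p)"

definition mu_of :: "('n, 'm) kkt_var \<Rightarrow> real^'m" where
  "mu_of p = snd (snd p)"

lemma bounded_linear_xy_of: "bounded_linear xy_of"
  and bounded_linear_t_of: "bounded_linear t_of"
  and bounded_linear_mu_of_nth: "bounded_linear (\<lambda>p. mu_of p $ j)"
  unfolding xy_of_def t_of_def mu_of_def
  by (intro bounded_linear_Pair bounded_linear_compose[OF bounded_linear_fst]
      bounded_linear_compose[OF bounded_linear_snd] bounded_linear_compose[OF bounded_linear_vec_nth]
      bounded_linear_fst bounded_linear_snd)+

lemmas has_derivative_xy_of = bounded_linear_imp_has_derivative[OF bounded_linear_xy_of]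
  and has_derivative_t_of = bounded_linear_imp_has_derivative[OF bounded_linear_t_of]
  and has_derivative_mu_of_nth = bounded_linear_imp_has_derivative[OF bounded_linear_mu_of_nth]
  and continuous_on_xy_of = linear_continuous_on[OF bounded_linear_xy_of]
  and continuous_on_t_of = linear_continuous_on[OF bounded_linear_t_of]
  and continuous_on_mu_of_nth = linear_continuous_on[OF bounded_linear_mu_of_nth]

context bilevel_point
begin

text \<open>
  The multiplier of an active constraint \<open>i\<close> is stored in the coordinate \<open>slot i\<close> of \<open>\<mu>\<close>; this needs
  \<open>card active \<le> CARD('m)\<close>, which LICQ provides. Complementarity forces the unused coordinates to
  vanish. Inactive multipliers are no variables at all: they are \<open>t / (- h i)\<close>, the solution of the
  perturbed complementarity condition \<open>\<mu>\<^sub>i (- h i) = t\<close>.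
\<close>
definition slot :: "nat \<Rightarrow> 'm" where
  "slot = (SOME e. inj_on e active)"

lemma inj_slot: "inj_on slot active"
proof -
  have "\<exists>e :: nat \<Rightarrow> 'm. inj_on e active"
    using card_le_inj[of active "UNIV :: 'm set"] finite_active card_active_le by auto
  then show ?thesis unfolding slot_def by (rule someI_ex)
qed

definition slot_idx :: "'m \<Rightarrow> nat" where
  "slot_idx = the_inv_into active slot"

lemma slot_idx_slot [simp]: "i \<in> active \<Longrightarrow> slot_idx (slot i) = i"
  unfolding slot_idx_def using inj_slot by (simp add: the_inv_into_f_f)

lemma slot_idx_less: "j \<in> slot ` active \<Longrightarrow> slot_idx j < k"
  using active_subset by auto

definition multiplier :: "('n, 'm) kkt_var \<Rightarrow> nat \<Rightarrow> real" where
  "multiplier p i = (if i \<in> active then mu_of p $ slot i else t_of p / (- h i (xy_of p)))"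

definition stationarity :: "('n, 'm) kkt_var \<Rightarrow> real^'m" where
  "stationarity p = grad_snd (G' (xy_of p)) + (\<Sum>i<k. multiplier p i *\<^sub>R grad_snd (H' i (xy_of p)))"

definition complementarity :: "('n, 'm) kkt_var \<Rightarrow> real^'m" where
  "complementarity p = (\<chi> j. if j \<in> slot ` active then mu_of p $ j * h (slot_idx j) (xy_of p) + t_of p
      else mu_of p $ j)"

definition kkt_map :: "('n, 'm) kkt_var \<Rightarrow> ('n, 'm) kkt_var" where
  "kkt_map p = (fst p, (stationarity p, complementarity p))"

definition kkt_domain :: "('n, 'm) kkt_var set" where
  "kkt_domain = {p. \<forall>i\<in>{..<k} - active. h i (xy_of p) < 0}"

definition multiplier_deriv :: "('n, 'm) kkt_var \<Rightarrow> ('n, 'm) kkt_var \<Rightarrow> nat \<Rightarrow> real" where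
  "multiplier_deriv p w i = (if i \<in> active then mu_of w $ slot i
      else (t_of w * (- h i (xy_of p)) + t_of p * blinfun_apply (H' i (xy_of p)) (xy_of w)) / (h i (xy_of p))\<^sup>2)"

definition stationarity_deriv :: "('n, 'm) kkt_var \<Rightarrow> ('n, 'm) kkt_var \<Rightarrow> real^'m" where
  "stationarity_deriv p w = grad_snd (blinfun_apply (G'' (xy_of p)) (xy_of w))
     + (\<Sum>i<k. multiplier_deriv p w i *\<^sub>R grad_snd (H' i (xy_of p))
              + multiplier p i *\<^sub>R grad_snd (blinfun_apply (H'' i (xy_of p)) (xy_of w)))"

definition complementarity_deriv :: "('n, 'm) kkt_var \<Rightarrow> ('n, 'm) kkt_var \<Rightarrow> real^'m" where
  "complementarity_deriv p w = (\<chi> j. if j \<in> slot ` active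
      then mu_of w $ j * h (slot_idx j) (xy_of p)
        + mu_of p $ j * blinfun_apply (H' (slot_idx j) (xy_of p)) (xy_of w) + t_of w
      else mu_of w $ j)"

definition kkt_map_deriv :: "('n, 'm) kkt_var \<Rightarrow> ('n, 'm) kkt_var \<Rightarrow> ('n, 'm) kkt_var" where
  "kkt_map_deriv p w = (fst w, (stationarity_deriv p w, complementarity_deriv p w))"

lemma has_derivative_h_xy_of:
  "i < k \<Longrightarrow> ((\<lambda>p. h i (xy_of p)) has_derivative (\<lambda>w. blinfun_apply (H' i (xy_of p)) (xy_of w))) (at p)"
  using has_derivative_compose[OF has_derivative_xy_of h_deriv] by (simp add: o_def)

lemma has_derivative_multiplier:
  assumes "i < k" and "p \<in> kkt_domain"
  shows "((\<lambda>p. multiplier p i) has_derivative (\<lambda>w. multiplier_deriv p w i)) (at p)"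
proof (cases "i \<in> active")
  case True
  then show ?thesis unfolding multiplier_def multiplier_deriv_def using has_derivative_mu_of_nth by simp
next
  case False
  then have "h i (xy_of p) \<noteq> 0" using assms by (force simp: kkt_domain_def)
  then have "((\<lambda>p. t_of p / (- h i (xy_of p))) has_derivative
     (\<lambda>w. (t_of w * (- h i (xy_of p)) - t_of p * (- blinfun_apply (H' i (xy_of p)) (xy_of w)))
       / ((- h i (xy_of p)) * (- h i (xy_of p))))) (at p)"
    by (intro has_derivative_divide' has_derivative_t_of has_derivative_minus has_derivative_h_xy_of
        \<open>i < k\<close>) simp
  with False show ?thesis unfolding multiplier_def multiplier_deriv_def by (simp add: power2_eq_square)
qed

lemma has_derivative_stationarity:
  assumes "p \<in> kkt_domain"
  shows "(stationarity has_derivative stationarity_deriv p) (at p)"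
proof -
  have "((\<lambda>p. multiplier p i *\<^sub>R grad_snd (H' i (xy_of p))) has_derivative
     (\<lambda>w. multiplier_deriv p w i *\<^sub>R grad_snd (H' i (xy_of p))
        + multiplier p i *\<^sub>R grad_snd (blinfun_apply (H'' i (xy_of p)) (xy_of w)))) (at p)" if "i < k" for i
    by (rule has_derivative_eq_rhs[OF has_derivative_scaleR[OF has_derivative_multiplier[OF that assms]
          has_derivative_grad_snd[OF has_derivative_compose[OF has_derivative_xy_of H'_deriv[OF that]]]]])
      (simp add: fun_eq_iff add.commute)
  moreover have "((\<lambda>p. grad_snd (G' (xy_of p))) has_derivative
      (\<lambda>w. grad_snd (blinfun_apply (G'' (xy_of p)) (xy_of w)))) (at p)"
    using has_derivative_grad_snd[OF has_derivative_compose[OF has_derivative_xy_of G'_deriv]]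
    by (simp add: o_def)
  ultimately show ?thesis
    unfolding stationarity_def stationarity_deriv_def[abs_def]
    by (intro has_derivative_add has_derivative_sum) auto
qed

lemma has_derivative_complementarity:
  "(complementarity has_derivative complementarity_deriv p) (at p)"
  unfolding complementarity_def complementarity_deriv_def[abs_def]
proof (intro has_derivative_vec_lambda)
  fix j :: 'm
  show "((\<lambda>p. if j \<in> slot ` active then mu_of p $ j * h (slot_idx j) (xy_of p) + t_of p else mu_of p $ j)
      has_derivative (\<lambda>w. if j \<in> slot ` active then mu_of w $ j * h (slot_idx j) (xy_of p)
        + mu_of p $ j * blinfun_apply (H' (slot_idx j) (xy_of p)) (xy_of w) + t_of w
      else mu_of w $ j)) (at p)"
  proof (cases "j \<in> slot ` active")
    case True
    have "((\<lambda>p. mu_of p $ j * h (slot_idx j) (xy_of p) + t_of p) has_derivative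
        (\<lambda>w. mu_of p $ j * blinfun_apply (H' (slot_idx j) (xy_of p)) (xy_of w)
          + mu_of w $ j * h (slot_idx j) (xy_of p) + t_of w)) (at p)"
      by (intro has_derivative_add has_derivative_mult has_derivative_mu_of_nth has_derivative_t_of
          has_derivative_h_xy_of slot_idx_less True)
    with True show ?thesis by (simp add: algebra_simps)
  qed (simp add: has_derivative_mu_of_nth)
qed

lemma has_derivative_kkt_map: "p \<in> kkt_domain \<Longrightarrow> (kkt_map has_derivative kkt_map_deriv p) (at p)"
  unfolding kkt_map_def kkt_map_deriv_def[abs_def]
  by (intro has_derivative_Pair has_derivative_stationarity has_derivative_complementarity
      has_derivative_fst[OF has_derivative_ident])

lemma kkt_domain_inactive_neg: "p \<in> kkt_domain \<Longrightarrow> i < k \<Longrightarrow> i \<notin> active \<Longrightarrow> h i (xy_of p) < 0"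
  by (simp add: kkt_domain_def)

lemma continuous_on_h_xy_of: "i < k \<Longrightarrow> continuous_on S (\<lambda>p. h i (xy_of p))"
  using h_deriv
  by (intro continuous_on_compose2[OF has_derivative_continuous_on continuous_on_xy_of, of UNIV]) auto

lemma continuous_on_H'_xy_of: "i < k \<Longrightarrow> continuous_on S (\<lambda>p. H' i (xy_of p))"
  using H'_deriv
  by (intro continuous_on_compose2[OF has_derivative_continuous_on continuous_on_xy_of, of UNIV]) auto

lemma continuous_on_multiplier: "i < k \<Longrightarrow> continuous_on kkt_domain (\<lambda>p. multiplier p i)"
  unfolding multiplier_def
  by (cases "i \<in> active")
     (auto dest: kkt_domain_inactive_neg intro!: continuous_on_mu_of_nth continuous_on_divide
       continuous_on_t_of continuous_on_minus continuous_on_h_xy_of)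

lemma continuous_on_multiplier_deriv: "i < k \<Longrightarrow> continuous_on kkt_domain (\<lambda>p. multiplier_deriv p w i)"
  unfolding multiplier_deriv_def
  by (cases "i \<in> active")
     (auto dest: kkt_domain_inactive_neg intro!: continuous_intros continuous_on_t_of continuous_on_h_xy_of
       blinfun.continuous_on continuous_on_H'_xy_of)

lemma continuous_on_kkt_map_deriv: "continuous_on kkt_domain (\<lambda>p. kkt_map_deriv p w)"
proof -
  have "continuous_on kkt_domain (\<lambda>p. G'' (xy_of p))"
    using G''_cont by (auto intro: continuous_on_compose2[OF _ continuous_on_xy_of])
  moreover have "continuous_on kkt_domain (\<lambda>p. H'' i (xy_of p))" if "i < k" for i
    using H''_cont[OF that] by (auto intro: continuous_on_compose2[OF _ continuous_on_xy_of])
  ultimately have "continuous_on kkt_domain (\<lambda>p. stationarity_deriv p w)"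
    unfolding stationarity_deriv_def
    by (intro continuous_intros continuous_on_grad_snd blinfun.continuous_on continuous_on_H'_xy_of
        continuous_on_multiplier continuous_on_multiplier_deriv) auto
  moreover have "continuous_on kkt_domain (\<lambda>p. complementarity_deriv p w)"
    unfolding complementarity_deriv_def
  proof (intro continuous_on_vec_lambda)
    fix j :: 'm
    show "continuous_on kkt_domain (\<lambda>p. if j \<in> slot ` active
      then mu_of w $ j * h (slot_idx j) (xy_of p)
        + mu_of p $ j * blinfun_apply (H' (slot_idx j) (xy_of p)) (xy_of w) + t_of w
      else mu_of w $ j)"
      by (cases "j \<in> slot ` active")
        (auto intro!: continuous_intros continuous_on_mu_of_nth continuous_on_h_xy_of slot_idx_less
          blinfun.continuous_on continuous_on_H'_xy_of)
  qed
  ultimately show ?thesis unfolding kkt_map_deriv_def by (intro continuous_on_Pair continuous_on_const)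
qed

definition kkt_map_blinfun :: "('n, 'm) kkt_var \<Rightarrow> ('n, 'm) kkt_var \<Rightarrow>\<^sub>L ('n, 'm) kkt_var" where
  "kkt_map_blinfun p = Blinfun (kkt_map_deriv p)"

lemma kkt_map_blinfun_apply: "p \<in> kkt_domain \<Longrightarrow> blinfun_apply (kkt_map_blinfun p) = kkt_map_deriv p"
  unfolding kkt_map_blinfun_def
  using has_derivative_bounded_linear[OF has_derivative_kkt_map] by (simp add: bounded_linear_Blinfun_apply)

lemma continuous_on_kkt_map_blinfun: "continuous_on kkt_domain kkt_map_blinfun"
proof (rule continuous_on_blinfun_componentwise)
  fix b :: "('n, 'm) kkt_var"
  show "continuous_on kkt_domain (\<lambda>p. blinfun_apply (kkt_map_blinfun p) b)"
    using continuous_on_kkt_map_deriv[of b] by (rule continuous_on_cong[THEN iffD1, rotated 2])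
      (auto simp: kkt_map_blinfun_apply)
qed

lemma open_kkt_domain: "open kkt_domain"
proof -
  have "kkt_domain = (\<Inter>i\<in>{..<k} - active. {p. h i (xy_of p) < 0})" by (auto simp: kkt_domain_def)
  then show ?thesis
    by (auto intro!: open_INT open_Collect_less continuous_on_h_xy_of)
qed

definition mu0 :: "real^'m" where
  "mu0 = (\<chi> j. if j \<in> slot ` active then lam (slot_idx j) else 0)"

definition p0 :: "('n, 'm) kkt_var" where
  "p0 = ((x, 0), (y0, mu0))"

lemma p0_simps [simp]: "xy_of p0 = (x, y0)" "t_of p0 = 0" "mu_of p0 = mu0" "fst p0 = (x, 0)"
  by (auto simp: p0_def xy_of_def t_of_def mu_of_def)

lemma multiplier_p0: "multiplier p0 i = lam i"
  by (auto simp: multiplier_def mu0_def lam_inactive)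

lemma p0_in_kkt_domain: "p0 \<in> kkt_domain"
  using inactive_neg by (auto simp: kkt_domain_def)

lemma kkt_map_p0: "kkt_map p0 = ((x, 0), (0, 0))"
proof -
  have "stationarity p0 = 0" using stationary_y0 by (simp add: stationarity_def multiplier_p0)
  moreover have "complementarity p0 = 0"
    by (auto simp: complementarity_def vec_eq_iff mu0_def active_def)
  ultimately show ?thesis by (simp add: kkt_map_def)
qed

lemma kkt_map_deriv_p0_inj: "inj (kkt_map_deriv p0)"
proof -
  have "w = 0" if w0: "kkt_map_deriv p0 w = 0" for w
  proof -
    obtain dx dt dy dm where w: "w = ((dx, dt), (dy, dm))" by (metis prod.collapse)
    then have "dx = 0" "dt = 0" using w0 by (auto simp: kkt_map_deriv_def zero_prod_def)
    then have coords: "xy_of w = (0, dy)" "t_of w = 0" "mu_of w = dm"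
      by (auto simp: w xy_of_def t_of_def mu_of_def)
    have S: "stationarity_deriv p0 w = 0" and C: "complementarity_deriv p0 w = 0"
      using w0 by (auto simp: kkt_map_deriv_def zero_prod_def)
    have dm_off: "dm $ j = 0" if "j \<notin> slot ` active" for j
      using arg_cong[OF C, of "\<lambda>v. v $ j"] that by (simp add: complementarity_deriv_def coords)
    have tangent: "grad_h0 i \<bullet> dy = 0" if "i \<in> active" for i
    proof -
      have "complementarity_deriv p0 w $ slot i = 0" using C by simp
      then have "lam i * (grad_h0 i \<bullet> dy) = 0"
        using that by (simp add: complementarity_deriv_def coords mu0_def active_def grad_h0_def grad_snd_inner)
      then show ?thesis using lam_active_pos[OF that] by simp
    qed
    have mult_deriv: "multiplier_deriv p0 w i = (if i \<in> active then dm $ slot i else 0)" for i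
      by (simp add: multiplier_deriv_def coords)
    have S_eq: "stationarity_deriv p0 w = grad_snd (blinfun_apply (G'' (x, y0)) (0, dy))
        + (\<Sum>i\<in>active. dm $ slot i *\<^sub>R grad_h0 i)
        + (\<Sum>i<k. lam i *\<^sub>R grad_snd (blinfun_apply (H'' i (x, y0)) (0, dy)))"
    proof -
      have "(\<Sum>i<k. (if i \<in> active then dm $ slot i else 0) *\<^sub>R grad_h0 i) = (\<Sum>i\<in>active. dm $ slot i *\<^sub>R grad_h0 i)"
        using active_subset by (intro sum.mono_neutral_cong_right) auto
      then show ?thesis
        by (simp add: stationarity_deriv_def coords mult_deriv multiplier_p0 grad_h0_def sum.distrib)
    qed
    have "stationarity_deriv p0 w \<bullet> dy = blinfun_apply (blinfun_apply (G'' (x, y0)) (0, dy)) (0, dy)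
        + (\<Sum>i<k. lam i * blinfun_apply (blinfun_apply (H'' i (x, y0)) (0, dy)) (0, dy))"
      using tangent by (simp add: S_eq inner_add_left inner_sum_left grad_snd_inner)
    then have "dy = 0" using second_order_uniqueness[OF ballI[OF tangent]] S by simp
    with S have "(\<Sum>i\<in>active. dm $ slot i *\<^sub>R grad_h0 i) = 0"
      by (simp add: S_eq zero_prod_def[symmetric] grad_snd_zero)
    then have "\<forall>i\<in>active. dm $ slot i = 0"
      using lin_indep_onD[OF lin_indep_active, of "\<lambda>i. dm $ slot i"] by blast
    with dm_off have "dm = 0" by (auto simp: vec_eq_iff) (metis imageE)
    with w \<open>dx = 0\<close> \<open>dt = 0\<close> \<open>dy = 0\<close> show "w = 0" by (simp add: zero_prod_def)
  qed
  moreover have "linear (kkt_map_deriv p0)"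
    using has_derivative_linear[OF has_derivative_kkt_map[OF p0_in_kkt_domain]] .
  ultimately show ?thesis by (simp add: linear_inj_iff_eq_0)
qed

lemma kkt_map_local_inverse:
  obtains V \<Psi> \<Psi>' where "open V" "((x, 0), (0, 0)) \<in> V" "\<Psi> ((x, 0), (0, 0)) = p0" "continuous_on V \<Psi>"
    "\<And>q. q \<in> V \<Longrightarrow> \<Psi> q \<in> kkt_domain" "\<And>q. q \<in> V \<Longrightarrow> kkt_map (\<Psi> q) = q"
    "\<And>q. q \<in> V \<Longrightarrow> (\<Psi> has_derivative \<Psi>' q) (at q)"
    "\<And>q. q \<in> V \<Longrightarrow> \<Psi>' q = inv (blinfun_apply (kkt_map_blinfun (\<Psi> q)))"
    "\<And>q. q \<in> V \<Longrightarrow> bij (blinfun_apply (kkt_map_blinfun (\<Psi> q)))"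
proof -
  have deriv: "(kkt_map has_derivative blinfun_apply (kkt_map_blinfun p)) (at p)" if "p \<in> kkt_domain" for p
    using has_derivative_kkt_map[OF that] kkt_map_blinfun_apply[OF that] by simp
  obtain L where "linear L" and L: "L \<circ> kkt_map_deriv p0 = id"
    using linear_injective_left_inverse[OF has_derivative_linear[OF has_derivative_kkt_map[OF p0_in_kkt_domain]]
        kkt_map_deriv_p0_inj] by blast
  then have left_inverse: "Blinfun L o\<^sub>L kkt_map_blinfun p0 = id_blinfun"
    by (intro blinfun_eqI)
       (simp add: bounded_linear_Blinfun_apply linear_conv_bounded_linear kkt_map_blinfun_apply[OF p0_in_kkt_domain]
         pointfree_idE)
  obtain U' V \<Psi> \<Psi>' where "open U'" "U' \<subseteq> kkt_domain" "p0 \<in> U'" "open V" "kkt_map p0 \<in> V"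
    and hom: "homeomorphism U' V kkt_map \<Psi>"
    and "\<And>q. q \<in> V \<Longrightarrow> (\<Psi> has_derivative \<Psi>' q) (at q)"
      "\<And>q. q \<in> V \<Longrightarrow> \<Psi>' q = inv (blinfun_apply (kkt_map_blinfun (\<Psi> q)))"
      "\<And>q. q \<in> V \<Longrightarrow> bij (blinfun_apply (kkt_map_blinfun (\<Psi> q)))"
    using inverse_function_theorem[OF open_kkt_domain deriv continuous_on_kkt_map_blinfun p0_in_kkt_domain
        left_inverse] by blast
  show ?thesis
  proof (rule that)
    show "open V" "\<And>q. q \<in> V \<Longrightarrow> (\<Psi> has_derivative \<Psi>' q) (at q)"
      "\<And>q. q \<in> V \<Longrightarrow> \<Psi>' q = inv (blinfun_apply (kkt_map_blinfun (\<Psi> q)))"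
      "\<And>q. q \<in> V \<Longrightarrow> bij (blinfun_apply (kkt_map_blinfun (\<Psi> q)))" by fact+
    show "((x, 0), (0, 0)) \<in> V" using \<open>kkt_map p0 \<in> V\<close> by (simp add: kkt_map_p0)
    show "\<Psi> ((x, 0), (0, 0)) = p0"
      using hom \<open>p0 \<in> U'\<close> unfolding homeomorphism_def kkt_map_p0[symmetric] by blast
    show "continuous_on V \<Psi>" "\<And>q. q \<in> V \<Longrightarrow> kkt_map (\<Psi> q) = q"
      using hom unfolding homeomorphism_def by blast+
    show "\<Psi> q \<in> kkt_domain" if "q \<in> V" for q
      using hom that \<open>U' \<subseteq> kkt_domain\<close> unfolding homeomorphism_def by blast
  qed
qed

section \<open>Solutions from zeros of the KKT map\<close>

lemma kkt_map_zero_parts: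
  assumes "kkt_map p = ((x', t), (0, 0))"
  shows "xy_of p = (x', fst (snd p))" and "t_of p = t"
    and "grad_snd (G' (x', fst (snd p))) + (\<Sum>i<k. multiplier p i *\<^sub>R grad_snd (H' i (x', fst (snd p)))) = 0"
    and "\<And>i. i \<in> active \<Longrightarrow> mu_of p $ slot i * h i (x', fst (snd p)) + t = 0"
proof -
  have fstp: "fst p = (x', t)" and S: "stationarity p = 0" and C: "complementarity p = 0"
    using assms by (auto simp: kkt_map_def)
  show xy: "xy_of p = (x', fst (snd p))" and t: "t_of p = t"
    using fstp by (auto simp: xy_of_def t_of_def)
  show "grad_snd (G' (x', fst (snd p))) + (\<Sum>i<k. multiplier p i *\<^sub>R grad_snd (H' i (x', fst (snd p)))) = 0"
    using S by (simp add: stationarity_def xy)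
  show "mu_of p $ slot i * h i (x', fst (snd p)) + t = 0" if "i \<in> active" for i
    using arg_cong[OF C, of "\<lambda>v. v $ slot i"] that by (simp add: complementarity_def xy t)
qed

lemma lower_solution_of_kkt_zero:
  assumes "p \<in> kkt_domain" and zero: "kkt_map p = ((x', 0), (0, 0))" and "x' \<in> X"
    and mu_pos: "\<forall>i\<in>active. 0 < mu_of p $ slot i"
    and determines: "\<not> SC_case \<Longrightarrow> active_determines x'"
  shows "ystar g h k x' = {fst (snd p)}"
proof -
  define y where "y = fst (snd p)"
  note parts = kkt_map_zero_parts[OF zero, folded y_def]
  have h_active: "h i (x', y) = 0" if "i \<in> active" for i
    using parts(4)[OF that] mu_pos[rule_format, OF that] by simp
  have h_inactive: "h i (x', y) < 0" if "i < k" "i \<notin> active" for i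
    using kkt_domain_inactive_neg[OF assms(1) that] parts(1) by simp
  have mult_active: "0 < multiplier p i" if "i \<in> active" for i
    using mu_pos that by (simp add: multiplier_def)
  have mult_inactive: "multiplier p i = 0" if "i \<notin> active" for i
    using that by (simp add: multiplier_def parts(2))
  have mult_nonneg: "0 \<le> multiplier p i" for i
    using mult_active mult_inactive by (cases "i \<in> active") (auto simp: less_imp_le)
  define R where "R z = (\<Sum>i<k. multiplier p i * (- h i (x', z)))" for z
  have slack: "multiplier p i * h i (x', y) = 0" for i
    using h_active mult_inactive by (cases "i \<in> active") simp_all
  have R_y: "R y = 0" by (simp add: R_def slack)
  have R_terms: "0 \<le> multiplier p i * (- h i (x', z))" if "z \<in> Yset h k x'" "i < k" for z i
    using that mult_nonneg[of i] by (simp add: Yset_def mult_nonneg_nonpos)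
  have "{z \<in> Yset h k x'. \<forall>z'\<in>Yset h k x'. g (x', z) \<le> g (x', z')} = {y}"
  proof (rule argmin_eq_singleton_by_splitting)
    show "y \<in> Yset h k x'"
      using h_active h_inactive by (force simp: Yset_def)
    show "g (x', z) = (g (x', z) + (\<Sum>i<k. multiplier p i * h i (x', z))) + R z" for z
      by (simp add: R_def sum_negf)
    show "g (x', y) + (\<Sum>i<k. multiplier p i * h i (x', y)) + modulus/2 * (norm (z - y))\<^sup>2
        \<le> g (x', z) + (\<Sum>i<k. multiplier p i * h i (x', z))" for z
      using lagrangian_ge[OF \<open>x' \<in> X\<close> _ parts(3)] mult_nonneg by blast
    show "R y \<le> R z" if "z \<in> Yset h k x'" for z
    proof -
      have "0 \<le> R z" unfolding R_def by (rule sum_nonneg) (rule R_terms[OF that], simp)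
      then show ?thesis by (simp add: R_y)
    qed
    have "z = y" if "\<not> SC_case" "z \<in> Yset h k x'" "R z = R y" for z
    proof -
      have "h i (x', z) = h i (x', y)" if "i \<in> active" for i
      proof -
        have sum0: "(\<Sum>i<k. multiplier p i * (- h i (x', z))) = 0"
          using \<open>R z = R y\<close> R_y by (simp only: R_def)
        have "multiplier p i * (- h i (x', z)) = 0"
          by (rule sum_nonneg_0[OF finite_lessThan _ sum0])
            (use R_terms[OF \<open>z \<in> Yset h k x'\<close>] that active_subset in auto)
        then show ?thesis using mult_active[OF that] h_active[OF that] by simp
      qed
      then show ?thesis using determines[OF \<open>\<not> SC_case\<close>] unfolding active_determines_def by simp
    qed
    then show "0 < modulus \<or> (\<forall>z\<in>Yset h k x'. R z = R y \<longrightarrow> z = y)" by (auto simp: modulus_pos_iff)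
  qed (use modulus_nonneg in auto)
  then show ?thesis by (simp add: ystar_def y_def)
qed

lemma barrier_solution_of_kkt_zero:
  assumes "p \<in> kkt_domain" and zero: "kkt_map p = ((x', t), (0, 0))" and "x' \<in> X" and "0 < t"
    and mu_pos: "\<forall>i\<in>active. 0 < mu_of p $ slot i"
    and determines: "\<not> SC_case \<Longrightarrow> active_determines x'"
  shows "ytstar t g h k x' = {fst (snd p)}"
proof -
  define y where "y = fst (snd p)"
  note parts = kkt_map_zero_parts[OF zero, folded y_def]
  have h_neg: "h i (x', y) < 0" if "i < k" for i
  proof (cases "i \<in> active")
    case True
    then have "mu_of p $ slot i * h i (x', y) < 0" using parts(4)[OF True] \<open>0 < t\<close> by simp
    then show ?thesis using mu_pos[rule_format, OF True] by (simp add: mult_less_0_iff)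
  qed (use kkt_domain_inactive_neg[OF assms(1) that] parts(1) in simp)
  have mult: "multiplier p i = t / (- h i (x', y))" if "i < k" for i
  proof (cases "i \<in> active")
    case True
    then show ?thesis
      using parts(4)[OF True] h_neg[OF that] by (simp add: multiplier_def field_simps)
  qed (simp add: multiplier_def parts(1,2))
  define S where "S = {z. \<forall>i<k. h i (x', z) < 0}"
  define R where "R z = (\<Sum>i<k. t / (- h i (x', y)) * (- h i (x', z)) - t * ln (- h i (x', z)))" for z
  have "{z \<in> S. \<forall>z'\<in>S. gbar t g h k (x', z) \<le> gbar t g h k (x', z')} = {y}"
  proof (rule argmin_eq_singleton_by_splitting)
    show "y \<in> S" using h_neg by (simp add: S_def)
    show "gbar t g h k (x', z) = (g (x', z) + (\<Sum>i<k. multiplier p i * h i (x', z))) + R z" for z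
      using gbar_eq_lagrangian_plus_barrier[of t g h k "(x', z)" "multiplier p"] mult
      by (simp add: R_def)
    show "g (x', y) + (\<Sum>i<k. multiplier p i * h i (x', y)) + modulus/2 * (norm (z - y))\<^sup>2
        \<le> g (x', z) + (\<Sum>i<k. multiplier p i * h i (x', z))" for z
    proof (rule lagrangian_ge[OF \<open>x' \<in> X\<close> _ parts(3)])
      show "\<forall>i<k. 0 \<le> multiplier p i"
        using mult h_neg \<open>0 < t\<close> by (simp add: divide_pos_neg less_imp_le)
    qed
    show "R y \<le> R z" if "z \<in> S" for z
      unfolding R_def by (rule barrier_sum_ge[OF \<open>0 < t\<close>]) (use that h_neg in \<open>auto simp: S_def\<close>)
    have "z = y" if "\<not> SC_case" "z \<in> S" "R z = R y" for z
    proof -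
      have "- h i (x', z) = - h i (x', y)" if "i \<in> active" for i
      proof (rule barrier_sum_eq_imp_eq[OF finite_lessThan \<open>0 < t\<close>])
        show "(\<Sum>i<k. t / (- h i (x', y)) * (- h i (x', z)) - t * ln (- h i (x', z)))
            = (\<Sum>i<k. t / (- h i (x', y)) * (- h i (x', y)) - t * ln (- h i (x', y)))"
          using \<open>R z = R y\<close> by (simp only: R_def)
      qed (use \<open>z \<in> S\<close> h_neg that active_subset in \<open>auto simp: S_def\<close>)
      then show ?thesis using determines[OF \<open>\<not> SC_case\<close>] unfolding active_determines_def by simp
    qed
    then show "0 < modulus \<or> (\<forall>z\<in>S. R z = R y \<longrightarrow> z = y)" by (auto simp: modulus_pos_iff)
  qed (use modulus_nonneg in auto)
  then show ?thesis by (simp add: ytstar_def S_def y_def)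
qed

end

section \<open>Convergence of the barrier hypergradient\<close>

definition barrier_hypergradient_limit ::
    "((real^'n) \<times> (real^'m) \<Rightarrow> real) \<Rightarrow> ((real^'n) \<times> (real^'m) \<Rightarrow> real)
      \<Rightarrow> (nat \<Rightarrow> (real^'n) \<times> (real^'m) \<Rightarrow> real) \<Rightarrow> nat \<Rightarrow> (real^'n) set \<Rightarrow> real^'n \<Rightarrow> bool" where
  "barrier_hypergradient_limit f g h k X x \<longleftrightarrow> (\<exists>Ys DYs Yt DYt.
           (\<forall>\<^sub>F x' in nhds x. x' \<in> X \<longrightarrow> ystar g h k x' = {Ys x'})
         \<and> (Ys has_derivative DYs) (at x within X)
         \<and> (\<forall>\<^sub>F t in at_right 0.
               (\<forall>\<^sub>F x' in nhds x. x' \<in> X \<longrightarrow> ytstar t g h k x' = {Yt t x'})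
             \<and> (Yt t has_derivative DYt t) (at x within X))
         \<and> ((\<lambda>t. hypergrad f (Yt t) (DYt t) x) \<longlongrightarrow> hypergrad f Ys DYs x) (at_right 0))"

locale kkt_local_inverse = bilevel_point f g h k X \<mu>g x F' G' G'' H' H''
  for f g :: "((real^'n) \<times> (real^'m)) \<Rightarrow> real" and h k X \<mu>g x F' G' G'' H' H'' +
  fixes V :: "('n, 'm) kkt_var set" and \<Psi> :: "('n, 'm) kkt_var \<Rightarrow> ('n, 'm) kkt_var"
    and \<Psi>' :: "('n, 'm) kkt_var \<Rightarrow> ('n, 'm) kkt_var \<Rightarrow> ('n, 'm) kkt_var"
  assumes open_V: "open V" and base_in_V: "((x, 0), (0, 0)) \<in> V"
    and \<Psi>_base: "\<Psi> ((x, 0), (0, 0)) = p0" and continuous_on_\<Psi>: "continuous_on V \<Psi>"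
    and \<Psi>_in_kkt_domain: "\<And>q. q \<in> V \<Longrightarrow> \<Psi> q \<in> kkt_domain"
    and kkt_map_\<Psi>: "\<And>q. q \<in> V \<Longrightarrow> kkt_map (\<Psi> q) = q"
    and \<Psi>_deriv: "\<And>q. q \<in> V \<Longrightarrow> (\<Psi> has_derivative \<Psi>' q) (at q)"
    and \<Psi>'_eq: "\<And>q. q \<in> V \<Longrightarrow> \<Psi>' q = inv (blinfun_apply (kkt_map_blinfun (\<Psi> q)))"
    and bij_kkt_map_blinfun: "\<And>q. q \<in> V \<Longrightarrow> bij (blinfun_apply (kkt_map_blinfun (\<Psi> q)))"
begin

definition target :: "real^'n \<Rightarrow> real \<Rightarrow> ('n, 'm) kkt_var" where
  "target x' t = ((x', t), (0, 0))"

definition Yt :: "real \<Rightarrow> real^'n \<Rightarrow> real^'m" where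
  "Yt t x' = fst (snd (\<Psi> (target x' t)))"

definition DYt :: "real \<Rightarrow> real^'n \<Rightarrow> real^'m" where
  "DYt t v = fst (snd (\<Psi>' (target x t) ((v, 0), (0, 0))))"

text \<open>
  In the linear case all second derivatives vanish, so \<open>((0, 0), (y' - y, 0))\<close> lies in the kernel of the
  derivative of \<open>kkt_map\<close> at \<open>\<Psi> (target x' 0)\<close>, which is invertible.
\<close>
lemma LIN_active_determines_near:
  assumes "\<not> SC_case" and "x' \<in> X" and "target x' 0 \<in> V"
  shows "active_determines x'"
  unfolding active_determines_def
proof (intro allI impI)
  fix y y' assume same: "\<forall>i\<in>active. h i (x', y') = h i (x', y)"
  define p where "p = \<Psi> (target x' 0)"
  have "p \<in> kkt_domain" using \<Psi>_in_kkt_domain[OF assms(3)] by (simp add: p_def)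
  have "kkt_map p = ((x', 0), (0, 0))" using kkt_map_\<Psi>[OF assms(3)] by (simp add: p_def target_def)
  note parts = kkt_map_zero_parts[OF this]
  obtain \<gamma> c0 \<alpha> \<beta> where h_aff: "\<And>i y. i < k \<Longrightarrow> h i (x', y) = \<alpha> i \<bullet> y + \<beta> i"
    using LIN_case[OF assms(1,2)] by metis
  define d where "d = y' - y"
  have \<alpha>d: "\<alpha> i \<bullet> d = 0" if "i \<in> active" for i
    using same that active_subset by (force simp: h_aff d_def inner_diff_right)
  define w :: "('n, 'm) kkt_var" where "w = ((0, 0), (d, 0))"
  have w: "xy_of w = (0, d)" "t_of w = 0" "mu_of w = 0" "fst w = (0, 0)"
    by (auto simp: w_def xy_of_def t_of_def mu_of_def)
  have "grad_snd (blinfun_apply (G'' (x', fst (snd p))) (0, d)) = 0"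
    and "\<And>i. i < k \<Longrightarrow> grad_snd (blinfun_apply (H'' i (x', fst (snd p))) (0, d)) = 0"
    using LIN_second_derivatives_vanish[OF assms(1,2)] by auto
  moreover have "multiplier_deriv p w i = 0" for i
    by (simp add: multiplier_deriv_def w parts(2))
  ultimately have "stationarity_deriv p w = 0"
    by (simp add: stationarity_deriv_def w parts(1))
  moreover have "complementarity_deriv p w = 0"
    using \<alpha>d slot_idx_less
    by (auto simp: complementarity_deriv_def vec_eq_iff w parts(1) grad_snd_inner grad_snd_H'_LIN[OF _ h_aff])
  ultimately have "kkt_map_deriv p w = kkt_map_deriv p 0"
    using linear_0[OF has_derivative_linear[OF has_derivative_kkt_map[OF \<open>p \<in> kkt_domain\<close>]]]
    by (simp add: kkt_map_deriv_def w zero_prod_def)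
  moreover have "inj (kkt_map_deriv p)"
    using bij_kkt_map_blinfun[OF assms(3)] kkt_map_blinfun_apply[OF \<open>p \<in> kkt_domain\<close>]
    by (simp add: p_def bij_is_inj)
  ultimately have "w = 0" by (simp add: inj_eq)
  then show "y' = y" by (simp add: w_def d_def zero_prod_def)
qed

lemma neighbourhood_of_base:
  obtains \<delta> where "0 < \<delta>"
    and "\<And>x' t. dist x' x < \<delta> \<Longrightarrow> \<bar>t\<bar> < \<delta> \<Longrightarrow>
      target x' t \<in> V \<and> (\<forall>i\<in>active. 0 < mu_of (\<Psi> (target x' t)) $ slot i)"
proof -
  define W where "W = (\<Inter>i\<in>active. {p :: ('n, 'm) kkt_var. 0 < mu_of p $ slot i})"
  have "open W"
    unfolding W_def by (intro open_INT finite_active ballI open_Collect_less continuous_on_mu_of_nth) auto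
  moreover have "\<Psi> (target x 0) \<in> W"
    using lam_active_pos \<Psi>_base by (simp add: W_def target_def mu0_def)
  moreover have "isCont \<Psi> (target x 0)"
    using continuous_on_\<Psi> open_V base_in_V by (simp add: target_def continuous_on_eq_continuous_at)
  then have "(\<Psi> \<longlongrightarrow> \<Psi> (target x 0)) (nhds (target x 0))"
    by (simp add: isCont_def tendsto_at_iff_tendsto_nhds)
  ultimately have "\<forall>\<^sub>F q in nhds (target x 0). \<Psi> q \<in> W"
    by (rule topological_tendstoD[rotated])
  moreover have "\<forall>\<^sub>F q in nhds (target x 0). q \<in> V"
    using open_V base_in_V by (simp add: target_def eventually_nhds_in_open)
  ultimately have "\<forall>\<^sub>F q in nhds (target x 0). \<Psi> q \<in> W \<and> q \<in> V"
    by (rule eventually_conj)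
  then obtain \<epsilon> where "0 < \<epsilon>" and \<epsilon>: "\<And>q. dist q (target x 0) < \<epsilon> \<Longrightarrow> \<Psi> q \<in> W \<and> q \<in> V"
    unfolding eventually_nhds_metric by blast
  show ?thesis
  proof (rule that[of "\<epsilon>/2"])
    fix x' t assume "dist x' x < \<epsilon>/2" "\<bar>t\<bar> < \<epsilon>/2"
    moreover have "dist (target x' t) (target x 0) \<le> dist x' x + \<bar>t\<bar>"
      using sqrt_sum_squares_le_sum_abs[of "dist x' x" "dist t 0"] by (simp add: target_def dist_Pair_Pair)
    ultimately show "target x' t \<in> V \<and> (\<forall>i\<in>active. 0 < mu_of (\<Psi> (target x' t)) $ slot i)"
      using \<epsilon>[of "target x' t"] by (auto simp: W_def)
  qed (use \<open>0 < \<epsilon>\<close> in simp)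
qed

lemma Yt_solves:
  assumes "x' \<in> X" and "target x' t \<in> V" and "target x' 0 \<in> V"
    and "\<forall>i\<in>active. 0 < mu_of (\<Psi> (target x' t)) $ slot i"
  shows "t = 0 \<Longrightarrow> ystar g h k x' = {Yt t x'}"
    and "0 < t \<Longrightarrow> ytstar t g h k x' = {Yt t x'}"
proof -
  have "kkt_map (\<Psi> (target x' t)) = ((x', t), (0, 0))"
    using kkt_map_\<Psi>[OF assms(2)] by (simp add: target_def)
  note zero = \<Psi>_in_kkt_domain[OF assms(2)] this assms(1)
  show "ystar g h k x' = {Yt t x'}" if "t = 0"
    using lower_solution_of_kkt_zero[OF zero[unfolded that] _ LIN_active_determines_near] assms that
    by (simp add: Yt_def)
  show "ytstar t g h k x' = {Yt t x'}" if "0 < t"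
    using barrier_solution_of_kkt_zero[OF zero that _ LIN_active_determines_near] assms
    by (simp add: Yt_def)
qed

lemma has_derivative_Yt:
  assumes "target x t \<in> V"
  shows "(Yt t has_derivative DYt t) (at x)"
proof -
  have "((\<lambda>x'. target x' t) has_derivative (\<lambda>v. ((v, 0), (0, 0)))) (at x)"
    unfolding target_def by (auto intro!: derivative_eq_intros simp: zero_prod_def)
  from has_derivative_compose[OF this \<Psi>_deriv[OF assms]]
  have "((\<lambda>x'. \<Psi> (target x' t)) has_derivative (\<lambda>v. \<Psi>' (target x t) ((v, 0), (0, 0)))) (at x)"
    by (simp add: o_def)
  then show ?thesis
    unfolding Yt_def[abs_def] DYt_def[abs_def] by (intro has_derivative_fst has_derivative_snd)
qed

lemma eventually_target_in_V: "\<forall>\<^sub>F t in at_right 0. target x t \<in> V"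
proof -
  obtain \<delta> where "0 < \<delta>" and "\<And>t. \<bar>t\<bar> < \<delta> \<Longrightarrow> target x t \<in> V"
    using neighbourhood_of_base by (metis dist_self)
  then show ?thesis unfolding eventually_at_right_field by (intro exI[of _ \<delta>]) auto
qed

lemma tendsto_\<Psi>_target: "((\<lambda>t. \<Psi> (target x t)) \<longlongrightarrow> \<Psi> (target x 0)) (at_right 0)"
  by (rule continuous_on_tendsto_compose[OF continuous_on_\<Psi> _ _ eventually_target_in_V])
     (auto simp: target_def base_in_V intro!: tendsto_intros)

lemma tendsto_DYt: "((\<lambda>t. DYt t v) \<longlongrightarrow> DYt 0 v) (at_right 0)"
proof -
  let ?M = "\<lambda>t. kkt_map_blinfun (\<Psi> (target x t))"
  have base: "target x 0 \<in> V" using base_in_V by (simp add: target_def)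
  have "(?M \<longlongrightarrow> ?M 0) (at_right 0)"
    using eventually_target_in_V
    by (intro continuous_on_tendsto_compose[OF continuous_on_kkt_map_blinfun tendsto_\<Psi>_target])
      (auto simp: \<Psi>_in_kkt_domain base elim: eventually_mono)
  moreover have "\<forall>\<^sub>F t in at_right 0. bij (blinfun_apply (?M t))"
    using eventually_target_in_V by eventually_elim (rule bij_kkt_map_blinfun)
  ultimately have "((\<lambda>t. inv (blinfun_apply (?M t)) ((v, 0), (0, 0)))
      \<longlongrightarrow> inv (blinfun_apply (?M 0)) ((v, 0), (0, 0))) (at_right 0)"
    by (rule tendsto_inv_blinfun_apply[OF _ bij_kkt_map_blinfun[OF base]])
  then have "((\<lambda>t. fst (snd (inv (blinfun_apply (?M t)) ((v, 0), (0, 0)))))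
      \<longlongrightarrow> DYt 0 v) (at_right 0)"
    by (auto simp: DYt_def \<Psi>'_eq[OF base] intro!: tendsto_intros)
  moreover have "\<forall>\<^sub>F t in at_right 0. fst (snd (inv (blinfun_apply (?M t)) ((v, 0), (0, 0)))) = DYt t v"
    using eventually_target_in_V by eventually_elim (simp add: DYt_def \<Psi>'_eq)
  ultimately show ?thesis by (rule Lim_transform_eventually)
qed

lemma tendsto_hypergrad:
  "((\<lambda>t. hypergrad f (Yt t) (DYt t) x) \<longlongrightarrow> hypergrad f (Yt 0) (DYt 0) x) (at_right 0)"
proof -
  have "((\<lambda>t. Yt t x) \<longlongrightarrow> Yt 0 x) (at_right 0)"
    unfolding Yt_def by (intro tendsto_fst tendsto_snd tendsto_\<Psi>_target)
  then have F': "((\<lambda>t. F' (x, Yt t x)) \<longlongrightarrow> F' (x, Yt 0 x)) (at_right 0)"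
    by (intro continuous_on_tendsto_compose[OF F'_cont]) (auto intro!: tendsto_intros)
  have "frechet_derivative f (at z) = blinfun_apply (F' z)" for z
    using frechet_derivative_at[OF f_deriv[of z]] by simp
  then show ?thesis
    unfolding hypergrad_def
    by (simp, intro tendsto_vec_lambda blinfun.tendsto[OF F'] tendsto_Pair tendsto_const tendsto_DYt)
qed

lemma hypergradient_limit: "barrier_hypergradient_limit f g h k X x"
  unfolding barrier_hypergradient_limit_def
proof (intro exI conjI)
  obtain \<delta> where "0 < \<delta>" and near: "\<And>x' t. dist x' x < \<delta> \<Longrightarrow> \<bar>t\<bar> < \<delta> \<Longrightarrow>
      target x' t \<in> V \<and> (\<forall>i\<in>active. 0 < mu_of (\<Psi> (target x' t)) $ slot i)"
    using neighbourhood_of_base by blast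
  have solves: "\<forall>\<^sub>F x' in nhds x. x' \<in> X \<longrightarrow>
      (if t = 0 then ystar g h k x' else ytstar t g h k x') = {Yt t x'}" if "0 \<le> t" "t < \<delta>" for t
    unfolding eventually_nhds_metric
    using \<open>0 < \<delta>\<close> that near Yt_solves by (intro exI[of _ \<delta>]) auto
  show "\<forall>\<^sub>F x' in nhds x. x' \<in> X \<longrightarrow> ystar g h k x' = {Yt 0 x'}"
    using solves[of 0] \<open>0 < \<delta>\<close> by simp
  show "\<forall>\<^sub>F t in at_right 0. (\<forall>\<^sub>F x' in nhds x. x' \<in> X \<longrightarrow> ytstar t g h k x' = {Yt t x'})
      \<and> (Yt t has_derivative DYt t) (at x within X)"
    unfolding eventually_at_right_field
  proof (intro exI[of _ \<delta>] conjI allI impI \<open>0 < \<delta>\<close>)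
    fix t :: real assume "0 < t" "t < \<delta>"
    then show "\<forall>\<^sub>F x' in nhds x. x' \<in> X \<longrightarrow> ytstar t g h k x' = {Yt t x'}"
      using solves[of t] by simp
    show "(Yt t has_derivative DYt t) (at x within X)"
      using near[of x t] \<open>0 < t\<close> \<open>t < \<delta>\<close> by (auto intro: has_derivative_at_withinI has_derivative_Yt)
  qed
  show "(Yt 0 has_derivative DYt 0) (at x within X)"
    using near[of x 0] \<open>0 < \<delta>\<close> by (auto intro: has_derivative_at_withinI has_derivative_Yt)
  show "((\<lambda>t. hypergrad f (Yt t) (DYt t) x) \<longlongrightarrow> hypergrad f (Yt 0) (DYt 0) x) (at_right 0)"
    by (rule tendsto_hypergrad)
qed

end

context bilevel_point
begin

lemma hypergradient_convergence: "barrier_hypergradient_limit f g h k X x"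
proof -
  obtain V \<Psi> \<Psi>' where "open V" "((x, 0), (0, 0)) \<in> V" "\<Psi> ((x, 0), (0, 0)) = p0" "continuous_on V \<Psi>"
    "\<And>q. q \<in> V \<Longrightarrow> \<Psi> q \<in> kkt_domain" "\<And>q. q \<in> V \<Longrightarrow> kkt_map (\<Psi> q) = q"
    "\<And>q. q \<in> V \<Longrightarrow> (\<Psi> has_derivative \<Psi>' q) (at q)"
    "\<And>q. q \<in> V \<Longrightarrow> \<Psi>' q = inv (blinfun_apply (kkt_map_blinfun (\<Psi> q)))"
    "\<And>q. q \<in> V \<Longrightarrow> bij (blinfun_apply (kkt_map_blinfun (\<Psi> q)))"
    using kkt_map_local_inverse by blast
  then interpret kkt_local_inverse f g h k X \<mu>g x F' G' G'' H' H'' V \<Psi> \<Psi>'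
    by unfold_locales
  show ?thesis by (rule hypergradient_limit)
qed

end

lemma C2_fun_family:
  assumes "\<forall>i<k. C2_fun (h i)"
  obtains H' H'' where "\<And>i z. i < k \<Longrightarrow> (h i has_derivative blinfun_apply (H' i z)) (at z)"
    and "\<And>i z. i < k \<Longrightarrow> (H' i has_derivative blinfun_apply (H'' i z)) (at z)"
    and "\<And>i. i < k \<Longrightarrow> continuous_on UNIV (H'' i)"
proof -
  have "\<forall>i\<in>{..<k}. \<exists>D. (\<forall>z. (h i has_derivative blinfun_apply (D z)) (at z))
      \<and> (\<exists>D'. (\<forall>z. (D has_derivative blinfun_apply (D' z)) (at z)) \<and> continuous_on UNIV D')"
    using assms by (simp add: C2_fun_def)
  from bchoice[OF this] obtain H' where H': "\<forall>i\<in>{..<k}. (\<forall>z. (h i has_derivative blinfun_apply (H' i z)) (at z))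
      \<and> (\<exists>D'. (\<forall>z. (H' i has_derivative blinfun_apply (D' z)) (at z)) \<and> continuous_on UNIV D')"
    by blast
  then have "\<forall>i\<in>{..<k}. \<exists>D'. (\<forall>z. (H' i has_derivative blinfun_apply (D' z)) (at z)) \<and> continuous_on UNIV D'"
    by blast
  from bchoice[OF this] obtain H'' where "\<forall>i\<in>{..<k}. (\<forall>z. (H' i has_derivative blinfun_apply (H'' i z)) (at z))
      \<and> continuous_on UNIV (H'' i)"
    by blast
  with H' show ?thesis using that by blast
qed

theorem theorem5:
  fixes f g :: "((real^'n) \<times> (real^'m)) \<Rightarrow> real"
    and h :: "nat \<Rightarrow> ((real^'n) \<times> (real^'m)) \<Rightarrow> real"
    and k :: nat
    and X :: "(real^'n) set"
    and \<mu>g :: real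
    and x :: "real^'n"
  assumes A1: "C1_fun f" "C2_fun g" "\<forall>i<k. C2_fun (h i)"
    and A2: "convex X" "compact X" "\<forall>x\<in>X. \<exists>y. \<forall>i<k. h i (x, y) < 0"
    and A3: "\<forall>x\<in>X. \<forall>y\<in>ystar g h k x. LICQ h k x y"
    and SC_or_LIN:
      "(\<mu>g > 0 \<and> (\<forall>x\<in>X. strongly_convex_on UNIV (\<lambda>y. g (x, y)) \<mu>g
                         \<and> (\<forall>i<k. convex_on UNIV (\<lambda>y. h i (x, y)))))
       \<or> (\<forall>x\<in>X. (\<exists>a b. \<forall>y. g (x, y) = a \<bullet> y + b)
                 \<and> (\<forall>i<k. \<exists>a b. \<forall>y. h i (x, y) = a \<bullet> y + b)
                 \<and> compact (Yset h k x))"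
    and xX: "x \<in> X"
    and scsc: "SCSC_point g h k x"
  shows "\<exists>Ys DYs Yt DYt.
           (\<forall>\<^sub>F x' in nhds x. x' \<in> X \<longrightarrow> ystar g h k x' = {Ys x'})
         \<and> (Ys has_derivative DYs) (at x within X)
         \<and> (\<forall>\<^sub>F t in at_right 0.
               (\<forall>\<^sub>F x' in nhds x. x' \<in> X \<longrightarrow> ytstar t g h k x' = {Yt t x'})
             \<and> (Yt t has_derivative DYt t) (at x within X))
         \<and> ((\<lambda>t. hypergrad f (Yt t) (DYt t) x) \<longlongrightarrow> hypergrad f Ys DYs x) (at_right 0)"
proof -
  obtain F' where "\<And>z. (f has_derivative blinfun_apply (F' z)) (at z)" "continuous_on UNIV F'"
    using A1(1) unfolding C1_fun_def by blast
  moreover obtain G' G'' where "\<And>z. (g has_derivative blinfun_apply (G' z)) (at z)"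
    "\<And>z. (G' has_derivative blinfun_apply (G'' z)) (at z)" "continuous_on UNIV G''"
    using A1(2) unfolding C2_fun_def by blast
  moreover obtain H' H'' where "\<And>i z. i < k \<Longrightarrow> (h i has_derivative blinfun_apply (H' i z)) (at z)"
    "\<And>i z. i < k \<Longrightarrow> (H' i has_derivative blinfun_apply (H'' i z)) (at z)"
    "\<And>i. i < k \<Longrightarrow> continuous_on UNIV (H'' i)"
    using C2_fun_family[OF A1(3)] by blast
  ultimately interpret bilevel_point f g h k X \<mu>g x F' G' G'' H' H''
    using A2(3) A3 SC_or_LIN xX scsc by unfold_locales
  show ?thesis using hypergradient_convergence by (simp add: barrier_hypergradient_limit_def)
qed

end
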